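(* Let $\Pi$ be an LCL problem with constant mending radius, i.e., $\Pi$ is $T$-mendable for some constant function $T$. Then $\Pi$ can be solved in $O(\log^* n)$ rounds in the LOCAL model.
   Context: A locally verifiable problem $\Pi$ on a graph family $\mathcal{G}$ is given by a set $\Sigma$ of input labels, a set $\Gamma$ of output labels and a verifier $\psi$ with verification radius $r$: $\psi(G,\lambda,v)\in\{\text{happy},\text{unhappy}\}$ depends only on the radius-$r$ neighborhood of $v$ (structure, inputs and outputs, up to isomorphism); $\lambda:V\to\Gamma$ is a solution if $\psi$ is happy everywhere. $\Pi$ is an LCL problem if $\Sigma,\Gamma$ are finite and all graphs in $\mathcal{G}$ have maximum degree bounded by a constant. Partial labelings are maps $\lambda:V\to\Gamma\cup\{\bot\}$; the relaxed verifier $\psi^*$ is happy at $v$ if some node within distance $r$ of $v$ has label $\bot$, and otherwise $\psi^*(G,\lambda,v)=\psi(G,\lambda',v)$ for any $\lambda':V\to\Gamma$ agreeing with $\lambda$ on the radius-$r$ neighborhood of $v$; $\psi^*$ accepts $\lambda$ if happy everywhere. Given $\lambda$ accepted by $\psi^*$ and node $v$, a $t$-mend of $\lambda$ at $v$ is a partial labeling $\mu$ accepted by $\psi^*$ with $\mu(v)\neq\bot$, $\mu(u)=\bot\Rightarrow\lambda(u)=\bot$, and $\mu(u)\neq\lambda(u)\Rightarrow\mathrm{dist}(u,v)\le t$. A verifier is $T$-mendable if for every $G\in\mathcal{G}$ with $n$ nodes, every $\lambda$ accepted by $\psi^*$ and every node $v$, a $T(n)$-mend at $v$ exists; $\Pi$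 is $T$-mendable if some radius-$r$ verifier for $\Pi$ (accepting exactly the solutions of $\Pi$) is $T$-mendable. LOCAL model: nodes with unique identifiers communicate along edges in synchronous rounds with unbounded messages; the running time is the number of rounds until all nodes output labels forming a valid solution. *)

theory Defs
  imports Complex_Main
begin

type_synonym ('v,'i) igraph = "'v set \<times> ('v \<Rightarrow> 'v \<Rightarrow> bool) \<times> ('v \<Rightarrow> 'i)"

definition verts :: "('v,'i) igraph \<Rightarrow> 'v set" where "verts G = fst G"
definition adj :: "('v,'i) igraph \<Rightarrow> 'v \<Rightarrow> 'v \<Rightarrow> bool" where "adj G = fst (snd G)"
definition inp :: "('v,'i) igraph \<Rightarrow> 'v \<Rightarrow> 'i" where "inp G = snd (snd G)"

definition wf_graph :: "('v,'i) igraph \<Rightarrow> bool" where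
  "wf_graph G \<longleftrightarrow> finite (verts G) \<and>
     (\<forall>a b. adj G a b \<longrightarrow> a \<in> verts G \<and> b \<in> verts G \<and> a \<noteq> b \<and> adj G b a)"

definition max_degree_le :: "('v,'i) igraph \<Rightarrow> nat \<Rightarrow> bool" where
  "max_degree_le G \<Delta> \<longleftrightarrow> (\<forall>v\<in>verts G. card {u \<in> verts G. adj G v u} \<le> \<Delta>)"

definition dist_le :: "('v,'i) igraph \<Rightarrow> nat \<Rightarrow> 'v \<Rightarrow> 'v \<Rightarrow> bool" where
  "dist_le G k u w \<longleftrightarrow> (\<exists>j\<le>k. (u, w) \<in> {(a, b). adj G a b} ^^ j)"

definition ball :: "('v,'i) igraph \<Rightarrow> 'v \<Rightarrow> nat \<Rightarrow> 'v set" where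
  "ball G v k = {u \<in> verts G. dist_le G k v u}"

definition labeling_in :: "('v,'i) igraph \<Rightarrow> 'o set \<Rightarrow> ('v \<Rightarrow> 'o) \<Rightarrow> bool" where
  "labeling_in G \<Gamma> l \<longleftrightarrow> (\<forall>v\<in>verts G. l v \<in> \<Gamma>)"

definition ball_iso :: "('v,'i) igraph \<Rightarrow> ('v \<Rightarrow> 'o) \<Rightarrow> 'v \<Rightarrow> ('v,'i) igraph \<Rightarrow> ('v \<Rightarrow> 'o) \<Rightarrow> 'v
    \<Rightarrow> nat \<Rightarrow> ('v \<Rightarrow> 'v) \<Rightarrow> bool" where
  "ball_iso G l v G' l' v' r f \<longleftrightarrow>
     bij_betw f (ball G v r) (ball G' v' r) \<and> f v = v' \<and>
     (\<forall>a\<in>ball G v r. \<forall>b\<in>ball G v r. adj G' (f a) (f b) \<longleftrightarrow> adj G a b) \<and>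
     (\<forall>a\<in>ball G v r. inp G' (f a) = inp G a \<and> l' (f a) = l a)"

text \<open>A verifier (True = happy) of verification radius r on the family \<G>.\<close>
definition local_verifier :: "('v,'i) igraph set \<Rightarrow> 'o set
    \<Rightarrow> (('v,'i) igraph \<Rightarrow> ('v \<Rightarrow> 'o) \<Rightarrow> 'v \<Rightarrow> bool) \<Rightarrow> nat \<Rightarrow> bool" where
  "local_verifier \<G> \<Gamma> \<psi> r \<longleftrightarrow>
     (\<forall>G\<in>\<G>. \<forall>G'\<in>\<G>. \<forall>l l' v v' f.
        labeling_in G \<Gamma> l \<and> labeling_in G' \<Gamma> l' \<and> v \<in> verts G \<and> v' \<in> verts G' \<and>
        ball_iso G l v G' l' v' r f \<longrightarrow> \<psi> G l v = \<psi> G' l' v')"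

definition LCL :: "('v,'i) igraph set \<Rightarrow> 'i set \<Rightarrow> 'o set
    \<Rightarrow> (('v,'i) igraph \<Rightarrow> ('v \<Rightarrow> 'o) \<Rightarrow> 'v \<Rightarrow> bool) \<Rightarrow> nat \<Rightarrow> bool" where
  "LCL \<G> \<Sigma> \<Gamma> \<psi> r \<longleftrightarrow> finite \<Sigma> \<and> finite \<Gamma> \<and>
     (\<forall>G\<in>\<G>. wf_graph G \<and> (\<forall>v\<in>verts G. inp G v \<in> \<Sigma>)) \<and>
     (\<exists>\<Delta>. \<forall>G\<in>\<G>. max_degree_le G \<Delta>) \<and>
     local_verifier \<G> \<Gamma> \<psi> r"

definition is_solution :: "'o set \<Rightarrow> (('v,'i) igraph \<Rightarrow> ('v \<Rightarrow> 'o) \<Rightarrow> 'v \<Rightarrow> bool)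
    \<Rightarrow> ('v,'i) igraph \<Rightarrow> ('v \<Rightarrow> 'o) \<Rightarrow> bool" where
  "is_solution \<Gamma> \<psi> G l \<longleftrightarrow> labeling_in G \<Gamma> l \<and> (\<forall>v\<in>verts G. \<psi> G l v)"

definition partial_labeling :: "('v,'i) igraph \<Rightarrow> 'o set \<Rightarrow> ('v \<Rightarrow> 'o option) \<Rightarrow> bool" where
  "partial_labeling G \<Gamma> \<mu> \<longleftrightarrow> (\<forall>v\<in>verts G. \<forall>x. \<mu> v = Some x \<longrightarrow> x \<in> \<Gamma>)"

definition psi_star :: "'o set \<Rightarrow> (('v,'i) igraph \<Rightarrow> ('v \<Rightarrow> 'o) \<Rightarrow> 'v \<Rightarrow> bool) \<Rightarrow> nat
    \<Rightarrow> ('v,'i) igraph \<Rightarrow> ('v \<Rightarrow> 'o option) \<Rightarrow> 'v \<Rightarrow> bool" where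
  "psi_star \<Gamma> \<psi> r G \<mu> v \<longleftrightarrow>
     (\<exists>u\<in>ball G v r. \<mu> u = None) \<or>
     (\<forall>l. labeling_in G \<Gamma> l \<and> (\<forall>u\<in>ball G v r. \<mu> u = Some (l u)) \<longrightarrow> \<psi> G l v)"

definition accepts_star :: "'o set \<Rightarrow> (('v,'i) igraph \<Rightarrow> ('v \<Rightarrow> 'o) \<Rightarrow> 'v \<Rightarrow> bool) \<Rightarrow> nat
    \<Rightarrow> ('v,'i) igraph \<Rightarrow> ('v \<Rightarrow> 'o option) \<Rightarrow> bool" where
  "accepts_star \<Gamma> \<psi> r G \<mu> \<longleftrightarrow>
     partial_labeling G \<Gamma> \<mu> \<and> (\<forall>v\<in>verts G. psi_star \<Gamma> \<psi> r G \<mu> v)"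

definition is_mend :: "'o set \<Rightarrow> (('v,'i) igraph \<Rightarrow> ('v \<Rightarrow> 'o) \<Rightarrow> 'v \<Rightarrow> bool) \<Rightarrow> nat
    \<Rightarrow> ('v,'i) igraph \<Rightarrow> ('v \<Rightarrow> 'o option) \<Rightarrow> 'v \<Rightarrow> nat \<Rightarrow> ('v \<Rightarrow> 'o option) \<Rightarrow> bool" where
  "is_mend \<Gamma> \<psi> r G lam v t \<mu> \<longleftrightarrow>
     accepts_star \<Gamma> \<psi> r G \<mu> \<and> \<mu> v \<noteq> None \<and>
     (\<forall>u\<in>verts G. \<mu> u = None \<longrightarrow> lam u = None) \<and>
     (\<forall>u\<in>verts G. \<mu> u \<noteq> lam u \<longrightarrow> dist_le G t v u)"

definition mendable :: "('v,'i) igraph set \<Rightarrow> 'o set \<Rightarrow> (('v,'i) igraph \<Rightarrow> ('v \<Rightarrow> 'o) \<Rightarrow> 'v \<Rightarrow> bool)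
    \<Rightarrow> nat \<Rightarrow> (nat \<Rightarrow> nat) \<Rightarrow> bool" where
  "mendable \<G> \<Gamma> \<psi> r T \<longleftrightarrow>
     (\<forall>G\<in>\<G>. \<forall>lam. accepts_star \<Gamma> \<psi> r G lam \<longrightarrow>
        (\<forall>v\<in>verts G. \<exists>\<mu>. is_mend \<Gamma> \<psi> r G lam v (T (card (verts G))) \<mu>))"

definition log_star :: "nat \<Rightarrow> nat" where
  "log_star n = (LEAST k. ((\<lambda>x. log 2 x) ^^ k) (real n) \<le> 1)"

text \<open>What a node v knows after gathering its radius-k neighbourhood, named by identifiers:
  n, its own id, ids in the ball, induced edges (as id pairs), inputs (id, input).\<close>
type_synonym 'i view = "nat \<times> nat \<times> nat set \<times> (nat \<times> nat) set \<times> (nat \<times> 'i) set"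

definition local_view :: "('v,'i) igraph \<Rightarrow> ('v \<Rightarrow> nat) \<Rightarrow> nat \<Rightarrow> 'v \<Rightarrow> 'i view" where
  "local_view G idf k v =
     (let B = ball G v k in
       (card (verts G), idf v, idf ` B,
        {(idf a, idf b) | a b. a \<in> B \<and> b \<in> B \<and> adj G a b},
        {(idf a, inp G a) | a. a \<in> B}))"

definition valid_ids :: "('v,'i) igraph \<Rightarrow> nat \<Rightarrow> ('v \<Rightarrow> nat) \<Rightarrow> bool" where
  "valid_ids G c idf \<longleftrightarrow> inj_on idf (verts G) \<and>
     (\<forall>v\<in>verts G. 1 \<le> idf v \<and> idf v \<le> card (verts G) ^ c)"

definition LOCAL_solves :: "('v,'i) igraph set \<Rightarrow> 'o set \<Rightarrow> (('v,'i) igraph \<Rightarrow> ('v \<Rightarrow> 'o) \<Rightarrow> 'v \<Rightarrow> bool)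
    \<Rightarrow> ('i view \<Rightarrow> 'o) \<Rightarrow> (nat \<Rightarrow> nat) \<Rightarrow> nat \<Rightarrow> bool" where
  "LOCAL_solves \<G> \<Gamma> \<psi> A t c \<longleftrightarrow>
     (\<forall>G\<in>\<G>. \<forall>idf. valid_ids G c idf \<longrightarrow>
        is_solution \<Gamma> \<psi> G (\<lambda>v. A (local_view G idf (t (card (verts G))) v)))"

definition solvable_in_O_log_star :: "('v,'i) igraph set \<Rightarrow> 'o set
    \<Rightarrow> (('v,'i) igraph \<Rightarrow> ('v \<Rightarrow> 'o) \<Rightarrow> 'v \<Rightarrow> bool) \<Rightarrow> bool" where
  "solvable_in_O_log_star \<G> \<Gamma> \<psi> \<longleftrightarrow>
     (\<forall>c::nat. \<exists>(A :: 'i view \<Rightarrow> 'o) (t :: nat \<Rightarrow> nat) (C :: nat).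
        (\<forall>n. t n \<le> C * (log_star n + 1)) \<and> LOCAL_solves \<G> \<Gamma> \<psi> A t c)"

end

theory Submission
  imports Defs
begin

text \<open>Since T is constant, nodes can be processed one colour class at a time: if the nodes of
  a class are pairwise more than 2T + 2r apart, each of them replaces the current partial
  labelling on its T-ball by a T-mend, the mends do not interfere, acceptance by \<psi>* is
  preserved and every node of the class becomes labelled. A distance-(2T + 2r + 1) colouring
  with O(1) colours is computed in O(log* n) rounds by Cole-Vishkin colour reduction: each node
  has boundedly many nodes of higher identifier within that distance, the j-th of them serves
  as its parent in the j-th pseudo-forest, every pseudo-forest is coloured with O(1) colours,
  and a node is coloured by the vector of its forest colours. Every quantity computed at a
  node only depends on a neighbourhood of radius proportional to the number of rounds, so the
  outputs are a function of the local views.\<close>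

section \<open>Distances and balls\<close>

abbreviation edges :: "('v,'i) igraph \<Rightarrow> ('v \<times> 'v) set" where
  "edges G \<equiv> {(a, b). adj G a b}"

lemma adj_sym: "wf_graph G \<Longrightarrow> adj G a b \<Longrightarrow> adj G b a"
  unfolding wf_graph_def by blast

lemma adj_in_verts: "wf_graph G \<Longrightarrow> adj G a b \<Longrightarrow> a \<in> verts G \<and> b \<in> verts G"
  unfolding wf_graph_def by blast

lemma dist_le_refl [simp]: "dist_le G k u u"
  unfolding dist_le_def by (rule exI[of _ 0]) auto

lemma dist_le_mono: "dist_le G k u w \<Longrightarrow> k \<le> k' \<Longrightarrow> dist_le G k' u w"
  unfolding dist_le_def by (meson order_trans)

lemma dist_le_trans: "dist_le G a u w \<Longrightarrow> dist_le G b w x \<Longrightarrow> dist_le G (a + b) u x"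
  unfolding dist_le_def
proof (elim exE conjE)
  fix i j assume "i \<le> a" "(u, w) \<in> edges G ^^ i" "j \<le> b" "(w, x) \<in> edges G ^^ j"
  then show "\<exists>k\<le>a + b. (u, x) \<in> edges G ^^ k"
    by (intro exI[of _ "i + j"]) (auto simp: relpow_add)
qed

lemma relpow_edges_sym:
  assumes "wf_graph G" "(u, w) \<in> edges G ^^ j"
  shows "(w, u) \<in> edges G ^^ j"
  using assms(2)
proof (induction j arbitrary: w)
  case (Suc j)
  from Suc.prems obtain y where "(u, y) \<in> edges G ^^ j" "(y, w) \<in> edges G"
    by (rule relpow_Suc_E)
  then show ?case
    using Suc.IH adj_sym[OF assms(1)] by (blast intro: relpow_Suc_I2)
qed simp

lemma dist_le_sym: "wf_graph G \<Longrightarrow> dist_le G k u w \<Longrightarrow> dist_le G k w u"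
  unfolding dist_le_def by (metis relpow_edges_sym)

lemma dist_le_SucE:
  assumes "dist_le G (Suc m) u y"
  obtains "dist_le G m u y" | x where "dist_le G m u x" "adj G x y"
proof -
  from assms obtain j where j: "j \<le> Suc m" "(u, y) \<in> edges G ^^ j"
    unfolding dist_le_def by auto
  show ?thesis
  proof (cases "j \<le> m")
    case True
    then show ?thesis using j that(1) unfolding dist_le_def by auto
  next
    case False
    with j have "(u, y) \<in> edges G ^^ Suc m" by (simp add: le_Suc_eq)
    then obtain x where "(u, x) \<in> edges G ^^ m" "(x, y) \<in> edges G" by (rule relpow_Suc_E)
    then show ?thesis using that(2) unfolding dist_le_def by blast
  qed
qed

lemma ball_subset_verts: "ball G v k \<subseteq> verts G"
  unfolding ball_def by auto

lemma in_ball_verts: "u \<in> ball G v k \<Longrightarrow> u \<in> verts G"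
  unfolding ball_def by simp

lemma center_in_ball [simp]: "v \<in> verts G \<Longrightarrow> v \<in> ball G v k"
  unfolding ball_def by simp

lemma ball_mono: "k \<le> k' \<Longrightarrow> ball G v k \<subseteq> ball G v k'"
  unfolding ball_def by (auto intro: dist_le_mono)

lemma ball_ball_subset: "w \<in> ball G v \<rho> \<Longrightarrow> ball G w \<sigma> \<subseteq> ball G v (\<rho> + \<sigma>)"
  unfolding ball_def by (auto intro: dist_le_trans)

lemma finite_ball: "wf_graph G \<Longrightarrow> finite (ball G v k)"
  by (rule finite_subset[OF ball_subset_verts]) (simp add: wf_graph_def)

lemma ball_Suc_subset:
  assumes "wf_graph G"
  shows "ball G v (Suc m) \<subseteq> ball G v m \<union> (\<Union>x\<in>ball G v m. {y \<in> verts G. adj G x y})"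
proof
  fix y assume "y \<in> ball G v (Suc m)"
  then have y: "y \<in> verts G" "dist_le G (Suc m) v y" unfolding ball_def by auto
  from y(2) show "y \<in> ball G v m \<union> (\<Union>x\<in>ball G v m. {y \<in> verts G. adj G x y})"
  proof (cases rule: dist_le_SucE)
    case 1
    then show ?thesis using y by (auto simp: ball_def)
  next
    case (2 x)
    then show ?thesis using y adj_in_verts[OF assms] by (auto simp: ball_def)
  qed
qed

lemma card_ball_le:
  assumes "wf_graph G" "max_degree_le G \<Delta>" "v \<in> verts G"
  shows "card (ball G v k) \<le> (\<Delta> + 1) ^ k"
proof (induction k)
  case 0
  have "ball G v 0 = {v}" using assms(3) unfolding ball_def dist_le_def by auto
  then show ?case by simp
next
  case (Suc m)
  have fin: "finite (verts G)" using assms(1) unfolding wf_graph_def by blast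
  let ?N = "\<lambda>x. {y \<in> verts G. adj G x y}"
  have "card (ball G v (Suc m)) \<le> card (ball G v m \<union> (\<Union>x\<in>ball G v m. ?N x))"
    using ball_Suc_subset[OF assms(1)] fin by (intro card_mono) (auto simp: ball_def)
  also have "\<dots> \<le> card (ball G v m) + (\<Sum>x\<in>ball G v m. card (?N x))"
    by (rule order_trans[OF card_Un_le add_left_mono[OF card_UN_le[OF finite_ball[OF assms(1)]]]])
  also have "\<dots> \<le> card (ball G v m) + card (ball G v m) * \<Delta>"
    using assms(2) sum_mono[of "ball G v m" "\<lambda>x. card (?N x)" "\<lambda>_. \<Delta>"]
    unfolding max_degree_le_def ball_def by auto
  also have "\<dots> \<le> (\<Delta> + 1) ^ Suc m"
    using Suc.IH by (simp add: add_mono)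
  finally show ?case .
qed

section \<open>Cole-Vishkin colour reduction\<close>

definition first_diff_bit :: "nat \<Rightarrow> nat \<Rightarrow> nat" where
  "first_diff_bit x y = (LEAST i. bit x i \<noteq> bit y i)"

text \<open>The new colour of a node with colour x whose parent differs from it first at bit i.\<close>
definition cv_colour :: "nat \<Rightarrow> nat \<Rightarrow> nat" where
  "cv_colour x i = 2 * i + (if bit x i then 1 else 0)"

lemma bit_first_diff_bit: "x \<noteq> y \<Longrightarrow> bit x (first_diff_bit x y) \<noteq> bit y (first_diff_bit x y)"
  unfolding first_diff_bit_def by (rule LeastI_ex) (metis bit_eq_iff)

lemma first_diff_bit_less:
  assumes "x \<noteq> y" "x < 2 ^ L" "y < 2 ^ L"
  shows "first_diff_bit x y < L"
proof (rule ccontr)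
  assume "\<not> first_diff_bit x y < L"
  then have "bit x i = bit y i" if "i < L" for i
    using that not_less_Least[of i "\<lambda>i. bit x i \<noteq> bit y i"] unfolding first_diff_bit_def
    by (meson less_le_trans not_le)
  then have "take_bit L x = take_bit L y"
    by (intro bit_eq_iff[THEN iffD2]) (auto simp: bit_take_bit_iff)
  moreover have "take_bit L x = x" "take_bit L y = y"
    using assms by (auto simp: take_bit_nat_eq_self_iff)
  ultimately show False
    using assms(1) by simp
qed

lemma cv_colour_less: "i < L \<Longrightarrow> cv_colour x i < 2 * L"
  unfolding cv_colour_def by auto

lemma cv_colour_first_diff_bit_neq:
  assumes "x \<noteq> y"
  shows "cv_colour x (first_diff_bit x y) \<noteq> cv_colour y i"
  using bit_first_diff_bit[OF assms] unfolding cv_colour_def by (auto split: if_splits) presburger+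

text \<open>The number of bits of the colours after one reduction step, starting from L bits.\<close>
definition next_bitlen :: "nat \<Rightarrow> nat" where
  "next_bitlen L = (LEAST m. 2 * L \<le> 2 ^ m)"

lemma double_le_two_pow_next_bitlen: "2 * L \<le> 2 ^ next_bitlen L"
  unfolding next_bitlen_def
proof (rule LeastI)
  show "2 * L \<le> 2 ^ Suc L" using less_exp[of L] by simp
qed

lemma next_bitlen_pos: "L \<ge> 1 \<Longrightarrow> next_bitlen L \<ge> 1"
  using double_le_two_pow_next_bitlen[of L] by (cases "next_bitlen L") auto

lemma next_bitlen_le_log:
  assumes "L \<ge> 1"
  shows "real (next_bitlen L) \<le> 2 + log 2 (real L)"
proof -
  define m where "m = nat \<lceil>log 2 (real L)\<rceil> + 1"
  have lg: "log 2 (real L) \<ge> 0" using assms by simp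
  have "real L = 2 powr (log 2 (real L))" using assms by simp
  also have "\<dots> \<le> 2 powr (real (nat \<lceil>log 2 (real L)\<rceil>))" using lg by (intro powr_mono) auto
  also have "\<dots> = 2 ^ nat \<lceil>log 2 (real L)\<rceil>" by (simp add: powr_realpow)
  finally have "real (2 * L) \<le> real (2 ^ m)" unfolding m_def by simp
  then have "next_bitlen L \<le> m"
    unfolding next_bitlen_def by (intro Least_le) linarith
  moreover have "real m \<le> 2 + log 2 (real L)" unfolding m_def using lg by linarith
  ultimately show ?thesis by linarith
qed

section \<open>Iterated logarithms\<close>

lemma log2_le_self: "log 2 (real m) \<le> real m"
proof (cases "m = 0")
  case False
  have "real m < 2 ^ m" using less_exp[of m] by (metis of_nat_less_iff of_nat_numeral of_nat_power)
  then have "log 2 (real m) < log 2 (2 ^ m)" using False by (subst log_less_cancel_iff) auto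
  then show ?thesis by simp
qed (simp add: log_def)

lemma le_two_pow_minus_3: "A \<ge> 8 \<Longrightarrow> A \<le> (2::nat) ^ (A - 3)"
proof (induction A rule: dec_induct)
  case (step n)
  then have "Suc n - 3 = Suc (n - 3)" by simp
  then show ?case using step by simp
qed simp

lemma log2_le_minus_3:
  assumes "A \<ge> (8::nat)"
  shows "log 2 (real A) \<le> real A - 3"
proof -
  have "real A \<le> 2 ^ (A - 3)"
    using le_two_pow_minus_3[OF assms] by (metis of_nat_le_iff of_nat_numeral of_nat_power)
  then have "log 2 (real A) \<le> log 2 (2 ^ (A - 3))" using assms by (subst log_le_cancel_iff) auto
  then show ?thesis using assms by simp
qed

text \<open>An offset of at least 8 is reproduced by one step of x \<mapsto> 2 + log x.\<close>
lemma two_plus_log_le_offset: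
  assumes "A \<ge> (8::nat)" "l > 1" "x \<ge> 1" "x \<le> real A + l"
  shows "2 + log 2 x \<le> real A + log 2 l"
proof -
  have lx: "log 2 x \<le> log 2 (real A + l)" using assms by (subst log_le_cancel_iff) auto
  show ?thesis
  proof (cases "l \<ge> real A")
    case True
    have "log 2 (real A + l) \<le> log 2 (2 * l)" using True assms by (subst log_le_cancel_iff) auto
    also have "\<dots> = 1 + log 2 l" using assms by (simp add: log_mult)
    finally show ?thesis using lx assms by linarith
  next
    case False
    have "log 2 (real A + l) \<le> log 2 (2 * real A)" using False assms by (subst log_le_cancel_iff) auto
    also have "\<dots> = 1 + log 2 (real A)" using assms by (simp add: log_mult)
    finally have "log 2 x \<le> real A - 2" using lx log2_le_minus_3[OF assms(1)] by linarith
    moreover have "log 2 l > 0" using assms by simp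
    ultimately show ?thesis by linarith
  qed
qed

abbreviation iter_log :: "nat \<Rightarrow> nat \<Rightarrow> real" where
  "iter_log n s \<equiv> ((\<lambda>x. log 2 x) ^^ s) (real n)"

lemma ex_iter_log_le_1: "x \<le> real m \<Longrightarrow> \<exists>k. ((\<lambda>x. log 2 x) ^^ k) x \<le> 1"
proof (induction m arbitrary: x)
  case (Suc m)
  show ?case
  proof (cases "x \<le> 1")
    case False
    have "log 2 x \<le> log 2 (real (Suc m))" using False Suc.prems by (subst log_le_cancel_iff) auto
    also have "\<dots> \<le> real m"
    proof -
      have "real (Suc m) \<le> 2 ^ m"
        using Suc_le_eq less_exp by (metis of_nat_le_iff of_nat_numeral of_nat_power)
      then have "log 2 (real (Suc m)) \<le> log 2 (2 ^ m)" by (subst log_le_cancel_iff) auto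
      then show ?thesis by simp
    qed
    finally obtain k where "((\<lambda>x. log 2 x) ^^ k) (log 2 x) \<le> 1" using Suc.IH by blast
    then have "((\<lambda>x. log 2 x) ^^ Suc k) x \<le> 1" by (simp only: funpow_Suc_right o_apply)
    then show ?thesis by blast
  qed (intro exI[of _ 0], simp)
qed (intro exI[of _ 0], simp)

lemma iter_log_log_star_le_1: "iter_log n (log_star n) \<le> 1"
  unfolding log_star_def by (rule LeastI_ex) (rule ex_iter_log_le_1[of _ n], simp)

lemma iter_log_gt_1: "s < log_star n \<Longrightarrow> iter_log n s > 1"
  unfolding log_star_def using not_less_Least by (metis not_le)

text \<open>Bit length of the colours after s reduction steps, starting from identifiers \<le> n^c.\<close>
fun bitlen :: "nat \<Rightarrow> nat \<Rightarrow> nat \<Rightarrow> nat" where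
  "bitlen c n 0 = c * nat \<lceil>log 2 (real n)\<rceil> + 1"
| "bitlen c n (Suc s) = next_bitlen (bitlen c n s)"

lemma bitlen_pos: "bitlen c n s \<ge> 1"
  using next_bitlen_pos by (induction s) fastforce+

lemma pow_less_two_pow_bitlen_0:
  assumes "n \<ge> 1"
  shows "n ^ c < 2 ^ bitlen c n 0"
proof -
  define b where "b = nat \<lceil>log 2 (real n)\<rceil>"
  have lg: "log 2 (real n) \<ge> 0" using assms by simp
  have "real n = 2 powr (log 2 (real n))" using assms by simp
  also have "\<dots> \<le> 2 powr (real b)" unfolding b_def using lg by (intro powr_mono) auto
  also have "\<dots> = 2 ^ b" by (simp add: powr_realpow)
  finally have "n \<le> 2 ^ b" by (metis of_nat_le_iff of_nat_numeral of_nat_power)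
  then have "n ^ c \<le> (2 ^ b) ^ c" by (rule power_mono) simp
  also have "\<dots> = 2 ^ (c * b)" by (simp add: power_mult[symmetric] mult.commute)
  also have "\<dots> < 2 ^ (c * b + 1)" by simp
  finally show ?thesis unfolding b_def by simp
qed

lemma bitlen_1_le:
  assumes "n \<ge> 2"
  shows "real (bitlen c n 1) \<le> real (3 * c + 8) + real n"
proof -
  have lg1: "log 2 (real n) \<ge> 1" using assms by simp
  have "real (bitlen c n 0) \<le> real c * (log 2 (real n) + 1) + 1"
    using lg1 by (simp add: mult_left_mono)
  also have "\<dots> \<le> real (2 * c + 1) * log 2 (real n)"
    using mult_left_mono[OF lg1, of "real c"] lg1 by (simp add: algebra_simps)
  finally have L0: "real (bitlen c n 0) \<le> real (2 * c + 1) * log 2 (real n)" .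
  have "log 2 (real (bitlen c n 0)) \<le> log 2 (real (2 * c + 1) * log 2 (real n))"
    using L0 bitlen_pos[of c n 0] lg1 by (subst log_le_cancel_iff) (auto simp del: bitlen.simps)
  also have "\<dots> = log 2 (real (2 * c + 1)) + log 2 (log 2 (real n))"
    using lg1 by (subst log_mult) auto
  also have "log 2 (log 2 (real n)) \<le> log 2 (real n)"
    using lg1 log2_le_self[of n] assms by (subst log_le_cancel_iff) auto
  also have "log 2 (real (2 * c + 1)) \<le> real (2 * c + 1)" by (rule log2_le_self)
  also have "log 2 (real n) \<le> real n" by (rule log2_le_self)
  finally have "log 2 (real (bitlen c n 0)) \<le> real (2 * c + 1) + real n" by simp
  moreover have "real (bitlen c n 1) \<le> 2 + log 2 (real (bitlen c n 0))"
    using next_bitlen_le_log[OF bitlen_pos[of c n 0]] by simp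
  ultimately show ?thesis by simp
qed

lemma bitlen_le_iter_log:
  assumes "1 \<le> s" "s \<le> log_star n"
  shows "real (bitlen c n s) \<le> real (3 * c + 8) + iter_log n (s - 1)"
  using assms
proof (induction s)
  case (Suc s)
  show ?case
  proof (cases "s = 0")
    case True
    then have "n \<ge> 2" using iter_log_gt_1[of 0 n] Suc.prems by simp
    then show ?thesis using bitlen_1_le[of n c] True by simp
  next
    case False
    then obtain s' where s': "s = Suc s'" by (cases s) auto
    then have IH: "real (bitlen c n s) \<le> real (3 * c + 8) + iter_log n s'" using Suc by simp
    have gt: "iter_log n s' > 1" using iter_log_gt_1[of s' n] Suc.prems s' by simp
    have "real (bitlen c n (Suc s)) \<le> 2 + log 2 (real (bitlen c n s))"
      using next_bitlen_le_log[OF bitlen_pos[of c n s]] by simp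
    also have "\<dots> \<le> real (3 * c + 8) + log 2 (iter_log n s')"
      using two_plus_log_le_offset[OF _ gt _ IH] bitlen_pos[of c n s] by simp
    finally show ?thesis using s' by simp
  qed
qed simp

lemma bitlen_log_star_le: "bitlen c n (log_star n) \<le> 3 * c + 10"
proof (cases "log_star n")
  case 0
  then have "n \<le> 1" using iter_log_log_star_le_1[of n] by simp
  then have "nat \<lceil>log 2 (real n)\<rceil> = 0" by (cases n) (auto simp: log_def)
  then show ?thesis using 0 by simp
next
  case (Suc k)
  have le: "real (bitlen c n (Suc k)) \<le> real (3 * c + 8) + iter_log n k"
    using bitlen_le_iter_log[of "Suc k" n c] Suc by simp
  have "iter_log n k > 1" using iter_log_gt_1[of k n] Suc by simp
  moreover have "log 2 (iter_log n k) \<le> 1"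
    using iter_log_log_star_le_1[of n] Suc by simp
  ultimately have "iter_log n k \<le> 2" by simp
  then show ?thesis using le Suc by simp
qed

definition rooted_ball_iso :: "('v,'i) igraph \<Rightarrow> 'v \<Rightarrow> ('v,'i) igraph \<Rightarrow> 'v \<Rightarrow> nat
    \<Rightarrow> ('v \<Rightarrow> 'v) \<Rightarrow> bool" where
  "rooted_ball_iso G u G' u' r f \<longleftrightarrow>
     bij_betw f (ball G u r) (ball G' u' r) \<and> f u = u' \<and>
     (\<forall>a\<in>ball G u r. \<forall>b\<in>ball G u r. adj G' (f a) (f b) \<longleftrightarrow> adj G a b) \<and>
     (\<forall>a\<in>ball G u r. inp G' (f a) = inp G a)"

lemma ball_iso_iff_rooted_ball_iso:
  "ball_iso G l u G' l' u' r f \<longleftrightarrow>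
     rooted_ball_iso G u G' u' r f \<and> (\<forall>a\<in>ball G u r. l' (f a) = l a)"
  unfolding ball_iso_def rooted_ball_iso_def by blast

lemma rooted_ball_iso_inv:
  assumes iso: "rooted_ball_iso G u G' u' r f" and u: "u \<in> verts G"
  shows "rooted_ball_iso G' u' G u r (the_inv_into (ball G u r) f)"
proof -
  let ?g = "the_inv_into (ball G u r) f"
  have bij: "bij_betw f (ball G u r) (ball G' u' r)" and fu: "f u = u'"
    and adj: "\<forall>a\<in>ball G u r. \<forall>b\<in>ball G u r. adj G' (f a) (f b) \<longleftrightarrow> adj G a b"
    and inp: "\<forall>a\<in>ball G u r. inp G' (f a) = inp G a"
    using iso unfolding rooted_ball_iso_def by auto
  have bij': "bij_betw ?g (ball G' u' r) (ball G u r)"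
    using bij by (rule bij_betw_the_inv_into)
  have fg: "f (?g a') = a'" if "a' \<in> ball G' u' r" for a'
    using bij that by (simp add: bij_betw_def f_the_inv_into_f)
  have "?g (f u) = u"
    using bij u by (simp add: bij_betw_def the_inv_into_f_f)
  moreover have "adj G (?g a') (?g b') \<longleftrightarrow> adj G' a' b'" "inp G (?g a') = inp G' a'"
    if a': "a' \<in> ball G' u' r" and b': "b' \<in> ball G' u' r" for a' b'
  proof -
    have "?g a' \<in> ball G u r" "?g b' \<in> ball G u r"
      using bij_betwE[OF bij'] a' b' by blast+
    then show "adj G (?g a') (?g b') \<longleftrightarrow> adj G' a' b'" "inp G (?g a') = inp G' a'"
      using adj inp fg[OF a'] fg[OF b'] by force+
  qed
  ultimately show ?thesis
    using bij' fu unfolding rooted_ball_iso_def by blast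
qed

lemma local_verifier_iso:
  assumes "local_verifier \<G> \<Gamma> \<psi> r" "G \<in> \<G>" "G' \<in> \<G>" "u \<in> verts G" "u' \<in> verts G'"
    and "labeling_in G \<Gamma> l" "labeling_in G' \<Gamma> l'"
    and "rooted_ball_iso G u G' u' r f" "\<forall>a\<in>ball G u r. l' (f a) = l a"
  shows "\<psi> G' l' u' = \<psi> G l u"
proof -
  have "ball_iso G l u G' l' u' r f"
    using assms(8,9) by (simp add: ball_iso_iff_rooted_ball_iso)
  then have "\<psi> G l u = \<psi> G' l' u'"
    using assms(2-7) by (intro assms(1)[unfolded local_verifier_def, rule_format]) blast+
  then show ?thesis ..
qed

lemma is_solution_cong:
  assumes lv: "local_verifier \<G> \<Gamma> \<psi> r" and G: "G \<in> \<G>" and sol: "is_solution \<Gamma> \<psi> G l"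
    and agree: "\<forall>u\<in>verts G. l' u = l u"
  shows "is_solution \<Gamma> \<psi> G l'"
proof -
  have l: "labeling_in G \<Gamma> l" and l': "labeling_in G \<Gamma> l'"
    using sol agree unfolding is_solution_def labeling_in_def by auto
  have "\<psi> G l' v = \<psi> G l v" if v: "v \<in> verts G" for v
  proof (rule local_verifier_iso[OF lv G G v v l l'])
    show "rooted_ball_iso G v G v r id"
      unfolding rooted_ball_iso_def by simp
    show "\<forall>a\<in>ball G v r. l' (id a) = l a"
      using agree in_ball_verts[of _ G v r] by simp
  qed
  then show ?thesis using sol l' unfolding is_solution_def by simp
qed

lemma psi_star_cong:
  "\<forall>a\<in>ball G u r. \<mu> a = \<mu>' a \<Longrightarrow> psi_star \<Gamma> \<psi> r G \<mu> u = psi_star \<Gamma> \<psi> r G \<mu>' u"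
  unfolding psi_star_def by auto

lemma psi_star_total:
  assumes "psi_star \<Gamma> \<psi> r G \<mu> v" "labeling_in G \<Gamma> l" "\<forall>a\<in>ball G v r. \<mu> a = Some (l a)"
  shows "\<psi> G l v"
  using assms unfolding psi_star_def by auto

lemma psi_star_iso_transfer:
  assumes lv: "local_verifier \<G> \<Gamma> \<psi> r" and GG: "G \<in> \<G>" "G' \<in> \<G>"
    and u: "u \<in> verts G" and u': "u' \<in> verts G'"
    and iso: "rooted_ball_iso G u G' u' r f" and agree: "\<forall>a\<in>ball G u r. \<mu>' (f a) = \<mu> a"
    and psi: "psi_star \<Gamma> \<psi> r G \<mu> u"
  shows "psi_star \<Gamma> \<psi> r G' \<mu>' u'"
  unfolding psi_star_def
proof (intro disjI2 allI impI, elim conjE)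
  fix l' assume l': "labeling_in G' \<Gamma> l'" "\<forall>a'\<in>ball G' u' r. \<mu>' a' = Some (l' a')"
  have f_ball: "f a \<in> ball G' u' r" if "a \<in> ball G u r" for a
    using iso that unfolding rooted_ball_iso_def bij_betw_def by blast
  define l where "l a = (if a \<in> ball G u r then l' (f a) else l' u')" for a
  have "l a \<in> \<Gamma>" for a
    using l' u' f_ball[of a] ball_subset_verts[of G' u' r] unfolding labeling_in_def l_def by auto
  then have l: "labeling_in G \<Gamma> l"
    unfolding labeling_in_def by blast
  have mu_l: "\<mu> a = Some (l a)" if "a \<in> ball G u r" for a
    using agree l'(2) f_ball[OF that] that unfolding l_def by force
  then have "\<psi> G l u"
    using psi_star_total[OF psi l] by blast
  moreover have "\<psi> G' l' u' = \<psi> G l u"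
    by (rule local_verifier_iso[OF lv GG u u' l l'(1) iso]) (simp add: l_def)
  ultimately show "\<psi> G' l' u'" by simp
qed

lemma psi_star_iso_eq:
  assumes lv: "local_verifier \<G> \<Gamma> \<psi> r" and GG: "G \<in> \<G>" "G' \<in> \<G>"
    and u: "u \<in> verts G" and u': "u' \<in> verts G'"
    and iso: "rooted_ball_iso G u G' u' r f" and agree: "\<forall>a\<in>ball G u r. \<mu>' (f a) = \<mu> a"
  shows "psi_star \<Gamma> \<psi> r G' \<mu>' u' = psi_star \<Gamma> \<psi> r G \<mu> u"
proof
  show "psi_star \<Gamma> \<psi> r G \<mu> u \<Longrightarrow> psi_star \<Gamma> \<psi> r G' \<mu>' u'"
    by (rule psi_star_iso_transfer[OF lv GG u u' iso agree])
  let ?g = "the_inv_into (ball G u r) f"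
  have bij: "bij_betw f (ball G u r) (ball G' u' r)"
    using iso unfolding rooted_ball_iso_def by blast
  have "\<mu> (?g a') = \<mu>' a'" if a': "a' \<in> ball G' u' r" for a'
  proof -
    have "?g a' \<in> ball G u r"
      using bij_betwE[OF bij_betw_the_inv_into[OF bij]] a' by blast
    moreover have "f (?g a') = a'"
      using bij a' by (simp add: bij_betw_def f_the_inv_into_f)
    ultimately show ?thesis
      using agree by force
  qed
  then show "psi_star \<Gamma> \<psi> r G' \<mu>' u' \<Longrightarrow> psi_star \<Gamma> \<psi> r G \<mu> u"
    using psi_star_iso_transfer[OF lv GG(2,1) u' u rooted_ball_iso_inv[OF iso u]] by blast
qed

section \<open>The algorithm\<close>

locale mending_setting =
  fixes \<G> :: "('v,'i) igraph set" and \<Gamma> :: "'o set"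
    and \<psi> :: "('v,'i) igraph \<Rightarrow> ('v \<Rightarrow> 'o) \<Rightarrow> 'v \<Rightarrow> bool"
    and r :: nat and T :: nat and \<Delta> :: nat and c :: nat
  assumes wf_family: "G \<in> \<G> \<Longrightarrow> wf_graph G"
    and max_degree_family: "G \<in> \<G> \<Longrightarrow> max_degree_le G \<Delta>"
    and verifier: "local_verifier \<G> \<Gamma> \<psi> r"
    and mendable: "mendable \<G> \<Gamma> \<psi> r (\<lambda>_. T)"
begin

definition sep_radius :: nat where
  "sep_radius = 2 * T + 2 * r + 1"

definition forests :: nat where
  "forests = (\<Delta> + 1) ^ sep_radius"

definition palette :: "nat list list" where
  "palette = List.n_lists forests [0..<2 ^ (3 * c + 10)]"

definition num_classes :: nat where
  "num_classes = length palette"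

definition higher_ids :: "('v,'i) igraph \<Rightarrow> ('v \<Rightarrow> nat) \<Rightarrow> 'v \<Rightarrow> nat list" where
  "higher_ids G idf u = sorted_list_of_set (idf ` {x \<in> ball G u sep_radius. idf u < idf x})"

text \<open>Pseudo-forest j links each node to its j-th higher identifier within distance sep_radius.
  As at most forests nodes lie that close, these pseudo-forests cover all pairs at that distance.\<close>
definition parent :: "('v,'i) igraph \<Rightarrow> ('v \<Rightarrow> nat) \<Rightarrow> nat \<Rightarrow> 'v \<Rightarrow> 'v option" where
  "parent G idf j u = (if j < length (higher_ids G idf u)
     then Some (the_inv_into (verts G) idf (higher_ids G idf u ! j)) else None)"

primrec forest_colour :: "('v,'i) igraph \<Rightarrow> ('v \<Rightarrow> nat) \<Rightarrow> nat \<Rightarrow> 'v \<Rightarrow> nat \<Rightarrow> nat" where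
  "forest_colour G idf 0 u j = idf u"
| "forest_colour G idf (Suc s) u j = (case parent G idf j u of
      None \<Rightarrow> cv_colour (forest_colour G idf s u j) 0
    | Some w \<Rightarrow> cv_colour (forest_colour G idf s u j)
        (first_diff_bit (forest_colour G idf s u j) (forest_colour G idf s w j)))"

definition cv_rounds :: "('v,'i) igraph \<Rightarrow> nat" where
  "cv_rounds G = log_star (card (verts G))"

definition colour :: "('v,'i) igraph \<Rightarrow> ('v \<Rightarrow> nat) \<Rightarrow> 'v \<Rightarrow> nat list" where
  "colour G idf u = map (forest_colour G idf (cv_rounds G) u) [0..<forests]"

definition in_class :: "('v,'i) igraph \<Rightarrow> ('v \<Rightarrow> nat) \<Rightarrow> nat \<Rightarrow> 'v \<Rightarrow> bool" where
  "in_class G idf p u \<longleftrightarrow> colour G idf u = palette ! p"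

definition patch :: "('v,'i) igraph \<Rightarrow> ('v \<Rightarrow> nat) \<Rightarrow> ('v \<Rightarrow> 'o option) \<Rightarrow> 'v
    \<Rightarrow> (nat \<Rightarrow> 'o option) \<Rightarrow> 'v \<Rightarrow> 'o option" where
  "patch G idf lab w m = (\<lambda>u. if u \<in> ball G w T then m (idf u) else lab u)"

text \<open>Local mends are functions on identifiers rather than on nodes, so that the Hilbert
  choice in phase_labeling makes the same choice in any two graphs with equal views.\<close>
definition local_mends :: "('v,'i) igraph \<Rightarrow> ('v \<Rightarrow> nat) \<Rightarrow> ('v \<Rightarrow> 'o option) \<Rightarrow> 'v
    \<Rightarrow> (nat \<Rightarrow> 'o option) set" where
  "local_mends G idf lab w = {m.
      (\<forall>i. i \<notin> idf ` ball G w T \<longrightarrow> m i = None) \<and> (\<forall>i x. m i = Some x \<longrightarrow> x \<in> \<Gamma>) \<and>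
      m (idf w) \<noteq> None \<and> (\<forall>u\<in>ball G w T. m (idf u) = None \<longrightarrow> lab u = None) \<and>
      (\<forall>u\<in>ball G w (T + r). psi_star \<Gamma> \<psi> r G (patch G idf lab w m) u)}"

lemma local_mendsD:
  assumes "m \<in> local_mends G idf lab w"
  shows "m i = Some x \<Longrightarrow> x \<in> \<Gamma>" "m (idf w) \<noteq> None"
    and "u \<in> ball G w T \<Longrightarrow> m (idf u) = None \<Longrightarrow> lab u = None"
    and "u \<in> ball G w (T + r) \<Longrightarrow> psi_star \<Gamma> \<psi> r G (patch G idf lab w m) u"
  using assms unfolding local_mends_def by blast+

definition centre :: "('v,'i) igraph \<Rightarrow> ('v \<Rightarrow> nat) \<Rightarrow> nat \<Rightarrow> 'v \<Rightarrow> 'v option" where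
  "centre G idf p u = (if \<exists>w\<in>verts G. in_class G idf p w \<and> dist_le G T w u
     then Some (SOME w. w \<in> verts G \<and> in_class G idf p w \<and> dist_le G T w u) else None)"

primrec phase_labeling :: "('v,'i) igraph \<Rightarrow> ('v \<Rightarrow> nat) \<Rightarrow> nat \<Rightarrow> 'v \<Rightarrow> 'o option" where
  "phase_labeling G idf 0 = (\<lambda>_. None)"
| "phase_labeling G idf (Suc p) = (\<lambda>u. case centre G idf p u of
      None \<Rightarrow> phase_labeling G idf p u
    | Some w \<Rightarrow> (SOME m. m \<in> local_mends G idf (phase_labeling G idf p) w) (idf u))"

definition chosen_mend :: "('v,'i) igraph \<Rightarrow> ('v \<Rightarrow> nat) \<Rightarrow> nat \<Rightarrow> 'v \<Rightarrow> nat \<Rightarrow> 'o option" where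
  "chosen_mend G idf p w = (SOME m. m \<in> local_mends G idf (phase_labeling G idf p) w)"

lemma phase_labeling_Suc:
  "phase_labeling G idf (Suc p) u = (case centre G idf p u of
      None \<Rightarrow> phase_labeling G idf p u | Some w \<Rightarrow> chosen_mend G idf p w (idf u))"
  unfolding chosen_mend_def by simp

definition out_label :: "('v,'i) igraph \<Rightarrow> ('v \<Rightarrow> nat) \<Rightarrow> 'v \<Rightarrow> 'o" where
  "out_label G idf v = the (phase_labeling G idf num_classes v)"

text \<open>The radius of the views that determine out_label: sep_radius for each Cole-Vishkin
  round and for each phase.\<close>
definition run_time :: "nat \<Rightarrow> nat" where
  "run_time n = (num_classes + log_star n + 1) * sep_radius"

lemma run_time_le: "run_time n \<le> ((num_classes + 1) * sep_radius) * (log_star n + 1)"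
proof -
  have "num_classes + log_star n + 1 \<le> (num_classes + 1) * (log_star n + 1)"
    by (simp add: algebra_simps)
  then show ?thesis
    unfolding run_time_def by (metis mult.assoc mult.commute mult_le_mono1)
qed

context
  fixes G idf
  assumes G: "G \<in> \<G>" and ids: "valid_ids G c idf"
begin

lemma wf_G: "wf_graph G"
  using wf_family[OF G] .

lemma inj_ids: "inj_on idf (verts G)"
  using ids unfolding valid_ids_def by blast

lemma set_higher_ids: "set (higher_ids G idf u) = idf ` {x \<in> ball G u sep_radius. idf u < idf x}"
  unfolding higher_ids_def using finite_ball[OF wf_G] by simp

lemma parent_SomeD:
  assumes "parent G idf j u = Some w"
  shows "w \<in> ball G u sep_radius" "idf u < idf w" "w \<in> verts G"
proof -
  have j: "j < length (higher_ids G idf u)"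
    and w: "w = the_inv_into (verts G) idf (higher_ids G idf u ! j)"
    using assms unfolding parent_def by (auto split: if_splits)
  obtain x where x: "x \<in> ball G u sep_radius" "idf u < idf x" "higher_ids G idf u ! j = idf x"
    using nth_mem[OF j] unfolding set_higher_ids by auto
  have "w = x"
    using w x(3) the_inv_into_f_f[OF inj_ids in_ball_verts[OF x(1)]] by simp
  then show "w \<in> ball G u sep_radius" "idf u < idf w" "w \<in> verts G"
    using x in_ball_verts[OF x(1)] by auto
qed

lemma parent_higher:
  assumes "w \<in> ball G u sep_radius" "idf u < idf w"
  obtains j where "j < length (higher_ids G idf u)" "parent G idf j u = Some w"
proof -
  have "idf w \<in> set (higher_ids G idf u)"
    unfolding set_higher_ids using assms by auto
  then obtain j where j: "j < length (higher_ids G idf u)" "higher_ids G idf u ! j = idf w"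
    by (auto simp: in_set_conv_nth)
  have "parent G idf j u = Some w"
    unfolding parent_def using j the_inv_into_f_f[OF inj_ids in_ball_verts[OF assms(1)]] by simp
  then show ?thesis using j that by blast
qed

lemma forest_colour_Suc_parent:
  assumes "forest_colour G idf s u j \<noteq> forest_colour G idf s w j" "parent G idf j u = Some w"
  shows "forest_colour G idf (Suc s) u j \<noteq> forest_colour G idf (Suc s) w j"
proof -
  obtain i where "forest_colour G idf (Suc s) w j = cv_colour (forest_colour G idf s w j) i"
    by (cases "parent G idf j w") auto
  then show ?thesis
    using assms cv_colour_first_diff_bit_neq by simp
qed

lemma forest_colour_parent_neq:
  assumes "parent G idf j u = Some w"
  shows "forest_colour G idf s u j \<noteq> forest_colour G idf s w j"
proof (induction s)
  case 0
  show ?case using parent_SomeD(2)[OF assms] by simp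
next
  case (Suc s)
  show ?case by (rule forest_colour_Suc_parent[OF Suc.IH assms])
qed

lemma forest_colour_less:
  assumes "u \<in> verts G"
  shows "forest_colour G idf s u j < 2 ^ bitlen c (card (verts G)) s"
  using assms
proof (induction s arbitrary: u)
  case 0
  have "card (verts G) \<ge> 1"
    using 0 wf_G unfolding wf_graph_def by (metis card_0_eq empty_iff less_one not_le)
  moreover have "idf u \<le> card (verts G) ^ c" using ids 0 unfolding valid_ids_def by blast
  ultimately show ?case using pow_less_two_pow_bitlen_0 by (metis le_less_trans forest_colour.simps(1))
next
  case (Suc s)
  define L where "L = bitlen c (card (verts G)) s"
  have "forest_colour G idf (Suc s) u j < 2 * L"
  proof (cases "parent G idf j u")
    case None
    then show ?thesis using bitlen_pos[of c "card (verts G)" s] cv_colour_less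
      unfolding L_def by simp
  next
    case (Some w)
    have "first_diff_bit (forest_colour G idf s u j) (forest_colour G idf s w j) < L"
      using first_diff_bit_less forest_colour_parent_neq[OF Some] Suc parent_SomeD(3)[OF Some]
      unfolding L_def by blast
    then show ?thesis using Some cv_colour_less by simp
  qed
  also have "\<dots> \<le> 2 ^ bitlen c (card (verts G)) (Suc s)"
    unfolding L_def using double_le_two_pow_next_bitlen by simp
  finally show ?case .
qed

lemma colour_in_palette:
  assumes "u \<in> verts G"
  shows "colour G idf u \<in> set palette"
proof -
  have "2 ^ bitlen c (card (verts G)) (cv_rounds G) \<le> (2::nat) ^ (3 * c + 10)"
    unfolding cv_rounds_def by (rule power_increasing[OF bitlen_log_star_le]) simp
  then have "forest_colour G idf (cv_rounds G) u j < 2 ^ (3 * c + 10)" for j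
    by (rule less_le_trans[OF forest_colour_less[OF assms]])
  then show ?thesis unfolding palette_def set_n_lists colour_def by auto
qed

lemma length_higher_ids_le:
  assumes "u \<in> verts G"
  shows "length (higher_ids G idf u) \<le> forests"
proof -
  have "length (higher_ids G idf u) = card (idf ` {x \<in> ball G u sep_radius. idf u < idf x})"
    unfolding higher_ids_def by simp
  also have "\<dots> \<le> card {x \<in> ball G u sep_radius. idf u < idf x}"
    using finite_ball[OF wf_G] by (intro card_image_le) simp
  also have "\<dots> \<le> card (ball G u sep_radius)"
    using finite_ball[OF wf_G] by (intro card_mono) auto
  also have "\<dots> \<le> forests"
    unfolding forests_def by (rule card_ball_le[OF wf_G max_degree_family[OF G] assms])
  finally show ?thesis .
qed

lemma colour_neq_if_higher:
  assumes "u \<in> verts G" "w \<in> ball G u sep_radius" "idf u < idf w"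
  shows "colour G idf u \<noteq> colour G idf w"
proof -
  obtain j where j: "j < length (higher_ids G idf u)" "parent G idf j u = Some w"
    using parent_higher[OF assms(2,3)] .
  have "j < forests" using j(1) length_higher_ids_le[OF assms(1)] by simp
  then have "colour G idf u ! j \<noteq> colour G idf w ! j"
    unfolding colour_def using forest_colour_parent_neq[OF j(2)] by simp
  then show ?thesis by metis
qed

lemma colour_neq_if_close:
  assumes "u \<in> verts G" "w \<in> verts G" "dist_le G sep_radius u w" "u \<noteq> w"
  shows "colour G idf u \<noteq> colour G idf w"
proof -
  have "w \<in> ball G u sep_radius" "u \<in> ball G w sep_radius"
    using assms dist_le_sym[OF wf_G] unfolding ball_def by auto
  moreover have "idf u \<noteq> idf w" using inj_ids assms unfolding inj_on_def by blast
  ultimately show ?thesis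
    using colour_neq_if_higher assms(1,2) by (metis linorder_neqE_nat)
qed

lemma in_class_separated:
  assumes "w1 \<in> verts G" "w2 \<in> verts G" "in_class G idf p w1" "in_class G idf p w2"
    and "dist_le G sep_radius w1 w2"
  shows "w1 = w2"
  using colour_neq_if_close[OF assms(1,2,5)] assms(3,4) unfolding in_class_def by auto

lemma centre_SomeD:
  assumes "centre G idf p u = Some w"
  shows "w \<in> verts G" "in_class G idf p w" "dist_le G T w u"
proof -
  have "\<exists>w. w \<in> verts G \<and> in_class G idf p w \<and> dist_le G T w u"
    and w: "w = (SOME w. w \<in> verts G \<and> in_class G idf p w \<and> dist_le G T w u)"
    using assms unfolding centre_def by (auto split: if_splits)
  then show "w \<in> verts G" "in_class G idf p w" "dist_le G T w u"
    using someI_ex by (metis (no_types, lifting))+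
qed

lemma centre_eqI:
  assumes w: "w \<in> verts G" "in_class G idf p w" "dist_le G T w u"
  shows "centre G idf p u = Some w"
proof -
  have "centre G idf p u \<noteq> None"
    using w unfolding centre_def by auto
  then obtain w' where w': "centre G idf p u = Some w'" by blast
  note w'_props = centre_SomeD[OF w']
  have "dist_le G (T + T) w' w"
    using dist_le_trans[OF w'_props(3) dist_le_sym[OF wf_G w(3)]] .
  then have "dist_le G sep_radius w' w"
    by (rule dist_le_mono) (simp add: sep_radius_def)
  then have "w' = w"
    using in_class_separated w'_props w by blast
  then show ?thesis using w' by simp
qed

lemma centre_self:
  assumes "u \<in> verts G" "in_class G idf p u"
  shows "centre G idf p u = Some u"
  by (rule centre_eqI[OF assms dist_le_refl])

lemma local_mend_of_mend:
  assumes "is_mend \<Gamma> \<psi> r G lab w T \<mu>" and w: "w \<in> verts G"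
  shows "(\<lambda>i. if i \<in> idf ` ball G w T then \<mu> (the_inv_into (verts G) idf i) else None)
    \<in> local_mends G idf lab w" (is "?m \<in> _")
proof -
  have acc_mu: "accepts_star \<Gamma> \<psi> r G \<mu>" and mu_w: "\<mu> w \<noteq> None"
    and none: "\<forall>u\<in>verts G. \<mu> u = None \<longrightarrow> lab u = None"
    and near: "\<forall>u\<in>verts G. \<mu> u \<noteq> lab u \<longrightarrow> dist_le G T w u"
    using assms(1) unfolding is_mend_def by auto
  have m_id: "?m (idf u) = \<mu> u" if "u \<in> ball G w T" for u
    using that the_inv_into_f_f[OF inj_ids in_ball_verts[OF that]] by auto
  have patch_eq: "patch G idf lab w ?m u = \<mu> u" if "u \<in> verts G" for u
    using that m_id near unfolding patch_def ball_def by auto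
  show ?thesis
    unfolding local_mends_def
  proof (intro CollectI conjI allI impI ballI)
    fix i x assume mi: "?m i = Some x"
    then obtain u where u: "u \<in> ball G w T" "i = idf u" by (auto split: if_splits)
    then show "x \<in> \<Gamma>"
      using mi m_id acc_mu in_ball_verts[OF u(1)]
      unfolding accepts_star_def partial_labeling_def by auto
  next
    fix u assume "u \<in> ball G w T" "?m (idf u) = None"
    then show "lab u = None" using m_id none in_ball_verts[of u G w T] by auto
  next
    fix u assume u: "u \<in> ball G w (T + r)"
    have "\<forall>a\<in>ball G u r. patch G idf lab w ?m a = \<mu> a"
      using patch_eq in_ball_verts[of _ G u r] by auto
    then have "psi_star \<Gamma> \<psi> r G (patch G idf lab w ?m) u = psi_star \<Gamma> \<psi> r G \<mu> u"
      by (rule psi_star_cong)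
    then show "psi_star \<Gamma> \<psi> r G (patch G idf lab w ?m) u"
      using acc_mu in_ball_verts[OF u] unfolding accepts_star_def by blast
  qed (use m_id[OF center_in_ball[OF w]] mu_w in simp_all)
qed

lemma local_mends_nonempty:
  assumes "accepts_star \<Gamma> \<psi> r G lab" "w \<in> verts G"
  shows "local_mends G idf lab w \<noteq> {}"
  using mendable G assms local_mend_of_mend unfolding mendable_def by blast

lemma chosen_mend_in_local_mends:
  assumes "accepts_star \<Gamma> \<psi> r G (phase_labeling G idf p)" "w \<in> verts G"
  shows "chosen_mend G idf p w \<in> local_mends G idf (phase_labeling G idf p) w"
  unfolding chosen_mend_def using local_mends_nonempty[OF assms] by (simp add: some_in_eq)

text \<open>Near a node within distance T + r of a centre, phase p + 1 only applies that centre's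
  mend, because any other centre of the same class is more than 2T + 2r away.\<close>
lemma phase_labeling_Suc_near:
  assumes w: "w \<in> verts G" "in_class G idf p w" "dist_le G (T + r) w u" and a: "a \<in> ball G u r"
  shows "phase_labeling G idf (Suc p) a = patch G idf (phase_labeling G idf p) w (chosen_mend G idf p w) a"
proof (cases "a \<in> ball G w T")
  case True
  then have "centre G idf p a = Some w" using centre_eqI w unfolding ball_def by blast
  then show ?thesis using True unfolding phase_labeling_Suc patch_def by simp
next
  case False
  have "centre G idf p a = None"
  proof (rule ccontr)
    assume "centre G idf p a \<noteq> None"
    then obtain w' where "centre G idf p a = Some w'" by blast
    note w' = centre_SomeD[OF this]
    have "dist_le G r u a" using a unfolding ball_def by simp
    then have "dist_le G (T + r + r + T) w w'"
      using dist_le_trans[OF dist_le_trans[OF w(3)] dist_le_sym[OF wf_G w'(3)]] by blast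
    then have "dist_le G sep_radius w w'"
      by (rule dist_le_mono) (simp add: sep_radius_def)
    then have "w = w'" using in_class_separated w w' by blast
    then show False using False w'(3) a unfolding ball_def by simp
  qed
  then show ?thesis using False unfolding phase_labeling_Suc patch_def by simp
qed

lemma phase_labeling_Suc_far:
  assumes far: "\<not> (\<exists>w\<in>verts G. in_class G idf p w \<and> dist_le G (T + r) w u)"
    and a: "a \<in> ball G u r"
  shows "phase_labeling G idf (Suc p) a = phase_labeling G idf p a"
proof -
  have "centre G idf p a = None"
  proof (rule ccontr)
    assume "centre G idf p a \<noteq> None"
    then obtain w' where "centre G idf p a = Some w'" by blast
    note w' = centre_SomeD[OF this]
    have "dist_le G r u a" using a unfolding ball_def by simp
    then have "dist_le G (T + r) w' u"
      using dist_le_trans[OF w'(3) dist_le_sym[OF wf_G]] by blast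
    then show False using far w' by blast
  qed
  then show ?thesis unfolding phase_labeling_Suc by simp
qed

lemma psi_star_phase_labeling_Suc:
  assumes acc: "accepts_star \<Gamma> \<psi> r G (phase_labeling G idf p)" and u: "u \<in> verts G"
  shows "psi_star \<Gamma> \<psi> r G (phase_labeling G idf (Suc p)) u"
proof (cases "\<exists>w\<in>verts G. in_class G idf p w \<and> dist_le G (T + r) w u")
  case True
  then obtain w where w: "w \<in> verts G" "in_class G idf p w" "dist_le G (T + r) w u" by blast
  have "u \<in> ball G w (T + r)" using w u unfolding ball_def by simp
  then have "psi_star \<Gamma> \<psi> r G (patch G idf (phase_labeling G idf p) w (chosen_mend G idf p w)) u"
    by (rule local_mendsD(4)[OF chosen_mend_in_local_mends[OF acc w(1)]])
  moreover have "\<forall>a\<in>ball G u r. phase_labeling G idf (Suc p) a =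
      patch G idf (phase_labeling G idf p) w (chosen_mend G idf p w) a"
    using phase_labeling_Suc_near[OF w] by blast
  then have "psi_star \<Gamma> \<psi> r G (phase_labeling G idf (Suc p)) u =
      psi_star \<Gamma> \<psi> r G (patch G idf (phase_labeling G idf p) w (chosen_mend G idf p w)) u"
    by (rule psi_star_cong)
  ultimately show ?thesis by blast
next
  case False
  then have "\<forall>a\<in>ball G u r. phase_labeling G idf (Suc p) a = phase_labeling G idf p a"
    using phase_labeling_Suc_far by blast
  then have "psi_star \<Gamma> \<psi> r G (phase_labeling G idf (Suc p)) u =
      psi_star \<Gamma> \<psi> r G (phase_labeling G idf p) u"
    by (rule psi_star_cong)
  then show ?thesis
    using acc u unfolding accepts_star_def by blast
qed

lemma accepts_star_phase_labeling_Suc: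
  assumes acc: "accepts_star \<Gamma> \<psi> r G (phase_labeling G idf p)"
  shows "accepts_star \<Gamma> \<psi> r G (phase_labeling G idf (Suc p))"
proof -
  have "x \<in> \<Gamma>" if u: "u \<in> verts G" and x: "phase_labeling G idf (Suc p) u = Some x" for u x
  proof (cases "centre G idf p u")
    case None
    then show ?thesis using x u acc
      unfolding phase_labeling_Suc accepts_star_def partial_labeling_def by auto
  next
    case (Some w)
    then show ?thesis
      using x local_mendsD(1)[OF chosen_mend_in_local_mends[OF acc centre_SomeD(1)[OF Some]]]
      unfolding phase_labeling_Suc by simp
  qed
  then show ?thesis
    using psi_star_phase_labeling_Suc[OF acc] unfolding accepts_star_def partial_labeling_def by blast
qed

lemma accepts_star_phase_labeling: "accepts_star \<Gamma> \<psi> r G (phase_labeling G idf p)"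
proof (induction p)
  case 0
  have "psi_star \<Gamma> \<psi> r G (\<lambda>_. None) u" if "u \<in> verts G" for u
    unfolding psi_star_def using center_in_ball[OF that] by blast
  then show ?case unfolding accepts_star_def partial_labeling_def by simp
qed (rule accepts_star_phase_labeling_Suc)

text \<open>Labels are never removed again: a mend only unlabels nodes that were unlabelled.\<close>
lemma phase_labeling_defined:
  assumes u: "u \<in> verts G" and "q < p" "in_class G idf q u"
  shows "phase_labeling G idf p u \<noteq> None"
  using assms(2)
proof (induction p)
  case (Suc p)
  show ?case
  proof (cases "centre G idf p u")
    case None
    have "q \<noteq> p" using centre_self[OF u] assms(3) None by auto
    then have "phase_labeling G idf p u \<noteq> None"
      using Suc by simp
    then show ?thesis
      unfolding phase_labeling_Suc None by simp
  next
    case (Some w)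
    note w = centre_SomeD[OF Some]
    note mend = local_mendsD[OF chosen_mend_in_local_mends[OF accepts_star_phase_labeling[of p] w(1)]]
    have "chosen_mend G idf p w (idf u) \<noteq> None"
    proof (cases "q = p")
      case True
      then have "w = u" using centre_self[OF u] assms(3) Some by simp
      then show ?thesis using mend(2) by simp
    next
      case False
      then have labelled: "phase_labeling G idf p u \<noteq> None" using Suc by simp
      have u_ball: "u \<in> ball G w T" using w(3) u unfolding ball_def by simp
      show ?thesis
      proof
        assume "chosen_mend G idf p w (idf u) = None"
        with u_ball have "phase_labeling G idf p u = None" by (rule mend(3))
        with labelled show False by simp
      qed
    qed
    then show ?thesis using Some unfolding phase_labeling_Suc by simp
  qed
qed simp

theorem out_label_is_solution: "is_solution \<Gamma> \<psi> G (out_label G idf)"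
proof -
  have acc: "accepts_star \<Gamma> \<psi> r G (phase_labeling G idf num_classes)"
    by (rule accepts_star_phase_labeling)
  have some: "phase_labeling G idf num_classes u = Some (out_label G idf u)" if u: "u \<in> verts G" for u
  proof -
    obtain q where "q < num_classes" "in_class G idf q u"
      using colour_in_palette[OF u]
      unfolding num_classes_def in_class_def by (metis in_set_conv_nth)
    then have "phase_labeling G idf num_classes u \<noteq> None"
      by (rule phase_labeling_defined[OF u])
    then show ?thesis unfolding out_label_def by auto
  qed
  have "out_label G idf u \<in> \<Gamma>" if u: "u \<in> verts G" for u
    using acc some[OF u] u unfolding accepts_star_def partial_labeling_def by blast
  then have lin: "labeling_in G \<Gamma> (out_label G idf)"
    unfolding labeling_in_def by blast
  have "\<psi> G (out_label G idf) u" if u: "u \<in> verts G" for u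
  proof (rule psi_star_total[OF _ lin])
    show "psi_star \<Gamma> \<psi> r G (phase_labeling G idf num_classes) u"
      using acc u unfolding accepts_star_def by blast
    show "\<forall>a\<in>ball G u r. phase_labeling G idf num_classes a = Some (out_label G idf a)"
      using some in_ball_verts[of _ G u r] by blast
  qed
  then show ?thesis unfolding is_solution_def using lin by blast
qed

end

end

text \<open>Under equal views of radius R, the nodes of the two R-balls correspond through their
  identifiers.\<close>
locale equal_views =
  fixes G :: "('v,'i) igraph" and idf :: "'v \<Rightarrow> nat" and v :: 'v
    and G' :: "('v,'i) igraph" and idf' :: "'v \<Rightarrow> nat" and v' :: 'v and R :: nat
  assumes wf: "wf_graph G" and wf': "wf_graph G'"
    and inj: "inj_on idf (verts G)" and inj': "inj_on idf' (verts G')"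
    and root: "v \<in> verts G" and root': "v' \<in> verts G'"
    and views: "local_view G idf R v = local_view G' idf' R v'"
begin

definition twin :: "'v \<Rightarrow> 'v" where
  "twin u = the_inv_into (verts G') idf' (idf u)"

lemma card_verts_eq: "card (verts G) = card (verts G')"
  and root_id_eq: "idf v = idf' v'"
  and ball_ids_eq: "idf ` ball G v R = idf' ` ball G' v' R"
  and ball_edges_eq: "{(idf a, idf b) | a b. a \<in> ball G v R \<and> b \<in> ball G v R \<and> adj G a b} =
     {(idf' a, idf' b) | a b. a \<in> ball G' v' R \<and> b \<in> ball G' v' R \<and> adj G' a b}"
  and ball_inputs_eq: "{(idf a, inp G a) | a. a \<in> ball G v R} =
     {(idf' a, inp G' a) | a. a \<in> ball G' v' R}"
  using views unfolding local_view_def Let_def by simp_all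

lemma equal_views_sym: "equal_views G' idf' v' G idf v R"
  using wf wf' inj inj' root root' views by unfold_locales simp_all

lemma twin_eqI:
  assumes "a' \<in> verts G'" "idf' a' = idf a"
  shows "twin a = a'"
  unfolding twin_def using the_inv_into_f_f[OF inj' assms(1)] assms(2) by simp

lemma twin_ball:
  assumes "u \<in> ball G v R"
  shows "twin u \<in> ball G' v' R" "idf' (twin u) = idf u"
proof -
  have "idf u \<in> idf' ` ball G' v' R"
    using ball_ids_eq assms by blast
  then obtain u' where u': "u' \<in> ball G' v' R" "idf' u' = idf u" by auto
  then have "twin u = u'" using twin_eqI[OF in_ball_verts[OF u'(1)]] by simp
  then show "twin u \<in> ball G' v' R" "idf' (twin u) = idf u" using u' by simp_all
qed

lemma twin_root: "twin v = v'"
  using twin_eqI[OF root'] root_id_eq by simp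

lemma inj_on_twin: "inj_on twin (ball G v R)"
proof
  fix a b assume ab: "a \<in> ball G v R" "b \<in> ball G v R" "twin a = twin b"
  then have "idf a = idf b" using twin_ball(2)[OF ab(1)] twin_ball(2)[OF ab(2)] by simp
  then show "a = b" using inj_onD[OF inj _ in_ball_verts[OF ab(1)] in_ball_verts[OF ab(2)]] by simp
qed

lemma adj_twin:
  assumes "a \<in> ball G v R" "b \<in> ball G v R" "adj G a b"
  shows "adj G' (twin a) (twin b)"
proof -
  have "(idf a, idf b) \<in> {(idf' a, idf' b) | a b. a \<in> ball G' v' R \<and> b \<in> ball G' v' R \<and> adj G' a b}"
    unfolding ball_edges_eq[symmetric] using assms by (intro CollectI exI conjI) (rule refl)
  then obtain a' b' where ab: "a' \<in> ball G' v' R" "b' \<in> ball G' v' R" "adj G' a' b'"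
    "idf' a' = idf a" "idf' b' = idf b" by auto
  then have "twin a = a'" "twin b = b'"
    using twin_eqI[OF in_ball_verts[OF ab(1)]] twin_eqI[OF in_ball_verts[OF ab(2)]] by simp_all
  then show ?thesis using ab by simp
qed

lemma inp_twin:
  assumes "a \<in> ball G v R"
  shows "inp G' (twin a) = inp G a"
proof -
  have "(idf a, inp G a) \<in> {(idf' a, inp G' a) | a. a \<in> ball G' v' R}"
    unfolding ball_inputs_eq[symmetric] using assms by (intro CollectI exI conjI) (rule refl)
  then obtain a' where a': "a' \<in> ball G' v' R" "idf' a' = idf a" "inp G' a' = inp G a" by auto
  then have "twin a = a'" using twin_eqI[OF in_ball_verts[OF a'(1)]] by simp
  then show ?thesis using a' by simp
qed

lemma relpow_twin:
  assumes "u \<in> ball G v \<rho>" "\<rho> + j \<le> R" "(u, w) \<in> edges G ^^ j"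
  shows "w \<in> ball G v (\<rho> + j) \<and> (twin u, twin w) \<in> edges G' ^^ j"
  using assms(2,3)
proof (induction j arbitrary: w)
  case 0
  then show ?case using assms(1) by simp
next
  case (Suc j)
  from Suc.prems(2) obtain y where y: "(u, y) \<in> edges G ^^ j" "(y, w) \<in> edges G"
    by (rule relpow_Suc_E)
  have IH: "y \<in> ball G v (\<rho> + j)" "(twin u, twin y) \<in> edges G' ^^ j"
    using Suc.IH[OF _ y(1)] Suc.prems(1) by auto
  have yw: "adj G y w" using y(2) by simp
  have "dist_le G (\<rho> + j) v y" using IH(1) unfolding ball_def by simp
  moreover have "dist_le G 1 y w" unfolding dist_le_def using y(2) by (intro exI[of _ 1]) auto
  ultimately have "dist_le G (\<rho> + j + 1) v w" by (rule dist_le_trans)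
  then have w: "w \<in> ball G v (\<rho> + Suc j)"
    using adj_in_verts[OF wf yw] unfolding ball_def by simp
  have "y \<in> ball G v R" "w \<in> ball G v R"
    using IH(1) w ball_mono[of "\<rho> + j" R G v] ball_mono[of "\<rho> + Suc j" R G v] Suc.prems(1)
    by auto
  then have "(twin y, twin w) \<in> edges G'" using adj_twin yw by simp
  with IH(2) have "(twin u, twin w) \<in> edges G' ^^ Suc j" by (rule relpow_Suc_I)
  then show ?case using w by simp
qed

lemma dist_le_twin:
  assumes "u \<in> ball G v \<rho>" "\<rho> + \<sigma> \<le> R" "dist_le G \<sigma> u w"
  shows "w \<in> ball G v (\<rho> + \<sigma>)" "dist_le G' \<sigma> (twin u) (twin w)"
proof -
  obtain j where j: "j \<le> \<sigma>" "(u, w) \<in> edges G ^^ j" using assms(3) unfolding dist_le_def by auto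
  have "w \<in> ball G v (\<rho> + j) \<and> (twin u, twin w) \<in> edges G' ^^ j"
    using relpow_twin[OF assms(1) _ j(2)] j assms(2) by simp
  then show "w \<in> ball G v (\<rho> + \<sigma>)" "dist_le G' \<sigma> (twin u) (twin w)"
    using j ball_mono[of "\<rho> + j" "\<rho> + \<sigma>" G v] unfolding dist_le_def by auto
qed

lemma twin_in_ball:
  assumes "u \<in> ball G v \<rho>" "\<rho> \<le> R"
  shows "twin u \<in> ball G' v' \<rho>"
proof -
  have "dist_le G' \<rho> (twin v) (twin u)"
    using dist_le_twin(2)[of v 0 \<rho> u] assms root unfolding ball_def by simp
  moreover have "twin u \<in> verts G'"
    using in_ball_verts[OF twin_ball(1)[OF subsetD[OF ball_mono[OF assms(2)] assms(1)]]] .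
  ultimately show ?thesis unfolding ball_def twin_root by simp
qed

end

lemma (in equal_views) twin_twin:
  assumes "u \<in> ball G v R"
  shows "equal_views.twin idf' G idf (twin u) = u"
proof -
  interpret sym: equal_views G' idf' v' G idf v R by (rule equal_views_sym)
  show ?thesis
    using sym.twin_eqI[OF in_ball_verts[OF assms]] twin_ball(2)[OF assms] by simp
qed

context equal_views
begin

lemma twin_image_ball:
  assumes u: "u \<in> ball G v \<rho>" and \<rho>\<sigma>: "\<rho> + \<sigma> \<le> R"
  shows "twin ` ball G u \<sigma> = ball G' (twin u) \<sigma>"
proof
  show "twin ` ball G u \<sigma> \<subseteq> ball G' (twin u) \<sigma>"
  proof
    fix x' assume "x' \<in> twin ` ball G u \<sigma>"
    then obtain x where x: "x \<in> ball G u \<sigma>" "x' = twin x" by blast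
    have "x \<in> ball G v (\<rho> + \<sigma>)" "dist_le G' \<sigma> (twin u) (twin x)"
      using dist_le_twin[OF u \<rho>\<sigma>] x unfolding ball_def by auto
    moreover have "twin x \<in> verts G'"
      using in_ball_verts[OF twin_ball(1)[OF subsetD[OF ball_mono[OF \<rho>\<sigma>] calculation(1)]]] .
    ultimately show "x' \<in> ball G' (twin u) \<sigma>" using x unfolding ball_def by simp
  qed
next
  show "ball G' (twin u) \<sigma> \<subseteq> twin ` ball G u \<sigma>"
  proof
    fix x' assume x': "x' \<in> ball G' (twin u) \<sigma>"
    interpret sym: equal_views G' idf' v' G idf v R by (rule equal_views_sym)
    have uR: "u \<in> ball G v R" using u ball_mono[of \<rho> R G v] \<rho>\<sigma> by auto
    have tu: "twin u \<in> ball G' v' \<rho>" using twin_in_ball u \<rho>\<sigma> by simp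
    have x'_ball: "x' \<in> ball G' v' (\<rho> + \<sigma>)" and d: "dist_le G \<sigma> (sym.twin (twin u)) (sym.twin x')"
      using sym.dist_le_twin[OF tu \<rho>\<sigma>] x' unfolding ball_def by auto
    have x'R: "x' \<in> ball G' v' R" using subsetD[OF ball_mono[OF \<rho>\<sigma>] x'_ball] .
    have "sym.twin x' \<in> ball G u \<sigma>"
      using d twin_twin[OF uR] in_ball_verts[OF sym.twin_ball(1)[OF x'R]] unfolding ball_def by simp
    moreover have "twin (sym.twin x') = x'" using sym.twin_twin[OF x'R] .
    ultimately show "x' \<in> twin ` ball G u \<sigma>" by (metis imageI)
  qed
qed

lemma twin_in_ball_iff:
  assumes w: "w \<in> ball G v \<rho>" and \<rho>\<sigma>: "\<rho> + \<sigma> \<le> R" and a: "a \<in> ball G v R"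
  shows "twin a \<in> ball G' (twin w) \<sigma> \<longleftrightarrow> a \<in> ball G w \<sigma>"
proof -
  have "ball G w \<sigma> \<subseteq> ball G v R"
    by (rule order_trans[OF ball_ball_subset[OF w] ball_mono[OF \<rho>\<sigma>]])
  then have "twin a \<in> twin ` ball G w \<sigma> \<longleftrightarrow> a \<in> ball G w \<sigma>"
    using inj_on_image_mem_iff[OF inj_on_twin a] by blast
  then show ?thesis using twin_image_ball[OF w \<rho>\<sigma>] by simp
qed

lemma adj_twin_iff:
  assumes "a \<in> ball G v R" "b \<in> ball G v R"
  shows "adj G' (twin a) (twin b) \<longleftrightarrow> adj G a b"
proof
  assume twins: "adj G' (twin a) (twin b)"
  interpret sym: equal_views G' idf' v' G idf v R by (rule equal_views_sym)
  have "adj G (sym.twin (twin a)) (sym.twin (twin b))"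
    using sym.adj_twin[OF twin_ball(1)[OF assms(1)] twin_ball(1)[OF assms(2)] twins] .
  then show "adj G a b" using twin_twin[OF assms(1)] twin_twin[OF assms(2)] by simp
qed (rule adj_twin[OF assms])

lemma rooted_ball_iso_twin:
  assumes u: "u \<in> ball G v \<rho>" and \<rho>r: "\<rho> + r \<le> R"
  shows "rooted_ball_iso G u G' (twin u) r twin"
  unfolding rooted_ball_iso_def
proof (intro conjI ballI)
  have sub: "ball G u r \<subseteq> ball G v R"
    by (rule order_trans[OF ball_ball_subset[OF u] ball_mono[OF \<rho>r]])
  show "bij_betw twin (ball G u r) (ball G' (twin u) r)"
    unfolding bij_betw_def twin_image_ball[OF u \<rho>r] using inj_on_subset[OF inj_on_twin sub] by simp
  show "twin u = twin u" ..
  show "adj G' (twin a) (twin b) \<longleftrightarrow> adj G a b" if "a \<in> ball G u r" "b \<in> ball G u r" for a b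
    using adj_twin_iff[OF subsetD[OF sub that(1)] subsetD[OF sub that(2)]] .
  show "inp G' (twin a) = inp G a" if "a \<in> ball G u r" for a
    using inp_twin[OF subsetD[OF sub that]] .
qed

end

section \<open>Locality of the algorithm\<close>

locale mending_equal_views = mending_setting \<G> \<Gamma> \<psi> r T \<Delta> c + equal_views G idf v G' idf' v' R
  for \<G> :: "('v,'i) igraph set" and \<Gamma> :: "'o set" and \<psi> r T \<Delta> c
    and G :: "('v,'i) igraph" and idf v and G' :: "('v,'i) igraph" and idf' v' R +
  assumes G: "G \<in> \<G>" and G': "G' \<in> \<G>"
    and ids: "valid_ids G c idf" and ids': "valid_ids G' c idf'"
begin

lemma in_ball_R: "\<rho> \<le> R \<Longrightarrow> x \<in> ball G v \<rho> \<Longrightarrow> x \<in> ball G v R"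
  by (rule subsetD[OF ball_mono])

lemma psi_star_twin:
  assumes u: "u \<in> ball G v \<rho>" and \<rho>r: "\<rho> + r \<le> R"
    and agree: "\<forall>a\<in>ball G u r. \<mu>' (twin a) = \<mu> a"
  shows "psi_star \<Gamma> \<psi> r G' \<mu>' (twin u) = psi_star \<Gamma> \<psi> r G \<mu> u"
proof (rule psi_star_iso_eq[OF verifier G G' _ _ rooted_ball_iso_twin[OF u \<rho>r] agree])
  have uR: "u \<in> ball G v R" using in_ball_R[of \<rho> u] u \<rho>r by simp
  show "u \<in> verts G" using in_ball_verts[OF uR] .
  show "twin u \<in> verts G'" using in_ball_verts[OF twin_ball(1)[OF uR]] .
qed

lemma higher_ids_twin:
  assumes u: "u \<in> ball G v \<rho>" and \<rho>k: "\<rho> + sep_radius \<le> R"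
  shows "higher_ids G' idf' (twin u) = higher_ids G idf u"
proof -
  have img: "ball G' (twin u) sep_radius = twin ` ball G u sep_radius"
    using twin_image_ball[OF u \<rho>k] by simp
  have sub: "ball G u sep_radius \<subseteq> ball G v R"
    by (rule order_trans[OF ball_ball_subset[OF u] ball_mono[OF \<rho>k]])
  have tu: "idf' (twin u) = idf u" using twin_ball(2) in_ball_R[of \<rho> u] u \<rho>k by simp
  have "idf' ` {x \<in> ball G' (twin u) sep_radius. idf' (twin u) < idf' x}
      = (\<lambda>x. idf' (twin x)) ` {x \<in> ball G u sep_radius. idf u < idf' (twin x)}"
    unfolding img tu by auto
  also have "\<dots> = idf ` {x \<in> ball G u sep_radius. idf u < idf x}"
    using twin_ball(2) sub by (intro image_cong) auto
  finally show ?thesis unfolding higher_ids_def by simp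
qed

lemma parent_twin:
  assumes u: "u \<in> ball G v \<rho>" and \<rho>k: "\<rho> + sep_radius \<le> R"
  shows "parent G' idf' j (twin u) = map_option twin (parent G idf j u)"
proof (cases "j < length (higher_ids G idf u)")
  case True
  define i where "i = higher_ids G idf u ! j"
  have "i \<in> idf ` ball G u sep_radius"
    using nth_mem[OF True] unfolding i_def set_higher_ids[OF G ids] by blast
  then have "i \<in> idf ` verts G"
    by (rule subsetD[OF image_mono[OF ball_subset_verts]])
  then have "twin (the_inv_into (verts G) idf i) = the_inv_into (verts G') idf' i"
    unfolding twin_def by (simp add: f_the_inv_into_f[OF inj])
  then show ?thesis
    unfolding parent_def higher_ids_twin[OF u \<rho>k] using True by (simp add: i_def)
next
  case False
  then show ?thesis unfolding parent_def higher_ids_twin[OF u \<rho>k] by simp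
qed

lemma forest_colour_twin:
  assumes "u \<in> ball G v \<rho>" "\<rho> + Suc s * sep_radius \<le> R"
  shows "forest_colour G' idf' s (twin u) j = forest_colour G idf s u j"
  using assms
proof (induction s arbitrary: \<rho> u)
  case 0
  then show ?case using twin_ball(2) in_ball_R[of \<rho> u] by simp
next
  case (Suc s)
  have \<rho>k: "\<rho> + sep_radius \<le> R" using Suc.prems by simp
  have IH: "forest_colour G' idf' s (twin u) j = forest_colour G idf s u j"
    using Suc.IH[of u \<rho>] Suc.prems by simp
  show ?case
  proof (cases "parent G idf j u")
    case None
    then show ?thesis using parent_twin[OF Suc.prems(1) \<rho>k] IH by simp
  next
    case (Some w)
    have "w \<in> ball G u sep_radius" using parent_SomeD(1)[OF G ids Some] .
    then have "w \<in> ball G v (\<rho> + sep_radius)" by (rule subsetD[OF ball_ball_subset[OF Suc.prems(1)]])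
    then have "forest_colour G' idf' s (twin w) j = forest_colour G idf s w j"
      using Suc.IH Suc.prems(2) by (simp add: algebra_simps)
    then show ?thesis using Some parent_twin[OF Suc.prems(1) \<rho>k] IH by simp
  qed
qed

lemma cv_rounds_eq: "cv_rounds G' = cv_rounds G"
  unfolding cv_rounds_def card_verts_eq ..

lemma in_class_twin:
  assumes "u \<in> ball G v \<rho>" "\<rho> + Suc (cv_rounds G) * sep_radius \<le> R"
  shows "in_class G' idf' p (twin u) = in_class G idf p u"
proof -
  have "forest_colour G' idf' (cv_rounds G) (twin u) = forest_colour G idf (cv_rounds G) u"
    using forest_colour_twin[OF assms] by (intro ext)
  then show ?thesis unfolding in_class_def colour_def cv_rounds_eq by simp
qed

lemma centre_twin_Some:
  assumes u: "u \<in> ball G v \<rho>" and \<rho>R: "\<rho> + sep_radius + Suc (cv_rounds G) * sep_radius \<le> R"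
    and centre: "centre G idf p u = Some w"
  shows "centre G' idf' p (twin u) = Some (twin w)"
proof (rule centre_eqI[OF G' ids'])
  note w = centre_SomeD[OF G ids centre]
  have \<rho>T: "\<rho> + T \<le> R" using \<rho>R by (simp add: sep_radius_def)
  have uw: "dist_le G T u w" using dist_le_sym[OF wf w(3)] .
  have wb: "w \<in> ball G v (\<rho> + T)" using dist_le_twin(1)[OF u \<rho>T uw] .
  show "dist_le G' T (twin w) (twin u)"
    using dist_le_sym[OF wf' dist_le_twin(2)[OF u \<rho>T uw]] .
  show "twin w \<in> verts G'"
    using in_ball_verts[OF twin_ball(1)[OF in_ball_R[OF \<rho>T wb]]] .
  show "in_class G' idf' p (twin w)"
    using in_class_twin[OF wb] \<rho>R w(2) by (simp add: sep_radius_def)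
qed

lemma centre_twin_None:
  assumes u: "u \<in> ball G v \<rho>" and \<rho>R: "\<rho> + sep_radius + Suc (cv_rounds G) * sep_radius \<le> R"
    and no_centre: "centre G idf p u = None"
  shows "centre G' idf' p (twin u) = None"
proof (rule ccontr)
  assume "centre G' idf' p (twin u) \<noteq> None"
  then obtain w' where "centre G' idf' p (twin u) = Some w'" by blast
  note w' = centre_SomeD[OF G' ids' this]
  have \<rho>T: "\<rho> + T \<le> R" using \<rho>R by (simp add: sep_radius_def)
  have "w' \<in> ball G' (twin u) T"
    using w'(1) dist_le_sym[OF wf' w'(3)] unfolding ball_def by simp
  then obtain w where w: "w \<in> ball G u T" "w' = twin w"
    unfolding twin_image_ball[OF u \<rho>T, symmetric] by (rule imageE) simp
  have wb: "w \<in> ball G v (\<rho> + T)" by (rule subsetD[OF ball_ball_subset[OF u] w(1)])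
  have "w \<in> verts G" "dist_le G T w u"
    using w(1) dist_le_sym[OF wf] unfolding ball_def by auto
  moreover have "in_class G idf p w"
    using in_class_twin[OF wb] \<rho>R w'(2) w(2) by (simp add: sep_radius_def)
  ultimately show False using no_centre centre_eqI[OF G ids] by simp
qed

lemma centre_twin:
  assumes "u \<in> ball G v \<rho>" "\<rho> + sep_radius + Suc (cv_rounds G) * sep_radius \<le> R"
  shows "centre G' idf' p (twin u) = map_option twin (centre G idf p u)"
  using centre_twin_Some[OF assms] centre_twin_None[OF assms] by (cases "centre G idf p u") simp_all

lemma patch_twin:
  assumes w: "w \<in> ball G v \<rho>" "\<rho> + T \<le> R" and a: "a \<in> ball G v R" "lab' (twin a) = lab a"
  shows "patch G' idf' lab' (twin w) m (twin a) = patch G idf lab w m a"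
  unfolding patch_def using twin_in_ball_iff[OF w a(1)] twin_ball(2)[OF a(1)] a(2) by simp

lemma psi_star_patch_twin:
  assumes w: "w \<in> ball G v \<rho>" and \<rho>R: "\<rho> + T + 2 * r \<le> R"
    and agree: "\<forall>a\<in>ball G v (\<rho> + T + 2 * r). lab' (twin a) = lab a"
    and u: "u \<in> ball G w (T + r)"
  shows "psi_star \<Gamma> \<psi> r G' (patch G' idf' lab' (twin w) m) (twin u) =
    psi_star \<Gamma> \<psi> r G (patch G idf lab w m) u"
proof (rule psi_star_twin)
  show ub: "u \<in> ball G v (\<rho> + (T + r))" by (rule subsetD[OF ball_ball_subset[OF w] u])
  show "\<rho> + (T + r) + r \<le> R" using \<rho>R by simp
  have "ball G u r \<subseteq> ball G v (\<rho> + T + 2 * r)"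
    by (rule order_trans[OF ball_ball_subset[OF ub] ball_mono]) simp
  then show "\<forall>a\<in>ball G u r. patch G' idf' lab' (twin w) m (twin a) = patch G idf lab w m a"
    using patch_twin[OF w] \<rho>R agree in_ball_R[OF \<rho>R] by (simp add: subset_iff)
qed

lemma local_mends_twin:
  assumes w: "w \<in> ball G v \<rho>" and \<rho>R: "\<rho> + T + 2 * r \<le> R"
    and agree: "\<forall>a\<in>ball G v (\<rho> + T + 2 * r). lab' (twin a) = lab a"
  shows "local_mends G' idf' lab' (twin w) = local_mends G idf lab w"
proof -
  have \<rho>T: "\<rho> + T \<le> R" and \<rho>Tr: "\<rho> + (T + r) \<le> R" using \<rho>R by simp_all
  have "ball G w T \<subseteq> ball G v (\<rho> + T + 2 * r)"
    by (rule order_trans[OF ball_ball_subset[OF w] ball_mono]) simp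
  then have twin_T: "\<forall>u\<in>ball G w T. idf' (twin u) = idf u \<and> lab' (twin u) = lab u"
    using in_ball_R[OF \<rho>R] twin_ball(2) agree by blast
  have ids_T: "idf' ` ball G' (twin w) T = idf ` ball G w T"
    unfolding twin_image_ball[OF w \<rho>T, symmetric] image_image using twin_T by simp
  have root_id: "idf' (twin w) = idf w" using twin_ball(2) in_ball_R[OF _ w] \<rho>T by simp
  have keep: "(\<forall>u'\<in>ball G' (twin w) T. m (idf' u') = None \<longrightarrow> lab' u' = None) \<longleftrightarrow>
      (\<forall>u\<in>ball G w T. m (idf u) = None \<longrightarrow> lab u = None)" for m
    unfolding twin_image_ball[OF w \<rho>T, symmetric] using twin_T by simp
  have psi: "(\<forall>u'\<in>ball G' (twin w) (T + r). psi_star \<Gamma> \<psi> r G' (patch G' idf' lab' (twin w) m) u') \<longleftrightarrow>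
      (\<forall>u\<in>ball G w (T + r). psi_star \<Gamma> \<psi> r G (patch G idf lab w m) u)" for m
    unfolding twin_image_ball[OF w \<rho>Tr, symmetric]
    using psi_star_patch_twin[OF w \<rho>R agree] by simp
  show ?thesis unfolding local_mends_def ids_T root_id keep psi ..
qed

lemma phase_labeling_twin:
  assumes "u \<in> ball G v \<rho>" "\<rho> + p * sep_radius + Suc (cv_rounds G) * sep_radius \<le> R"
  shows "phase_labeling G' idf' p (twin u) = phase_labeling G idf p u"
  using assms
proof (induction p arbitrary: \<rho> u)
  case (Suc p)
  have \<rho>R: "\<rho> + sep_radius + Suc (cv_rounds G) * sep_radius \<le> R" using Suc.prems(2) by simp
  have IH: "phase_labeling G' idf' p (twin a) = phase_labeling G idf p a"
    if "a \<in> ball G v (\<rho> + sep_radius)" for a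
    using Suc.IH[OF that] Suc.prems(2) by (simp add: algebra_simps)
  show ?case
  proof (cases "centre G idf p u")
    case None
    then show ?thesis
      using centre_twin[OF Suc.prems(1) \<rho>R] IH[OF subsetD[OF ball_mono Suc.prems(1)]]
      unfolding phase_labeling_Suc by simp
  next
    case (Some w)
    note w = centre_SomeD[OF G ids Some]
    have \<rho>T: "\<rho> + T \<le> R" using \<rho>R by (simp add: sep_radius_def)
    have wb: "w \<in> ball G v (\<rho> + T)"
      by (rule dist_le_twin(1)[OF Suc.prems(1) \<rho>T dist_le_sym[OF wf w(3)]])
    have "\<forall>a\<in>ball G v (\<rho> + T + T + 2 * r). phase_labeling G' idf' p (twin a) = phase_labeling G idf p a"
      using IH ball_mono[of "\<rho> + T + T + 2 * r" "\<rho> + sep_radius" G v]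
      by (auto simp: sep_radius_def)
    then have "local_mends G' idf' (phase_labeling G' idf' p) (twin w) =
        local_mends G idf (phase_labeling G idf p) w"
      using local_mends_twin[OF wb] \<rho>R by (simp add: sep_radius_def)
    then have "chosen_mend G' idf' p (twin w) = chosen_mend G idf p w"
      unfolding chosen_mend_def by simp
    moreover have "idf' (twin u) = idf u"
      using twin_ball(2) in_ball_R[OF _ Suc.prems(1)] \<rho>T by simp
    ultimately show ?thesis
      using centre_twin[OF Suc.prems(1) \<rho>R] Some unfolding phase_labeling_Suc by simp
  qed
qed simp

lemma out_label_twin:
  assumes "num_classes * sep_radius + Suc (cv_rounds G) * sep_radius \<le> R"
  shows "out_label G' idf' v' = out_label G idf v"
  using phase_labeling_twin[of v 0 num_classes] assms root twin_root
  unfolding out_label_def by simp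

end

lemma (in mending_setting) out_label_view_invariant:
  assumes "G \<in> \<G>" "G' \<in> \<G>" "valid_ids G c idf" "valid_ids G' c idf'" "v \<in> verts G" "v' \<in> verts G'"
    and "local_view G idf (run_time (card (verts G))) v =
      local_view G' idf' (run_time (card (verts G))) v'"
  shows "out_label G' idf' v' = out_label G idf v"
proof -
  interpret mending_equal_views \<G> \<Gamma> \<psi> r T \<Delta> c G idf v G' idf' v' "run_time (card (verts G))"
    using assms wf_family by unfold_locales (auto simp: valid_ids_def)
  show ?thesis
    by (rule out_label_twin) (simp add: run_time_def cv_rounds_def algebra_simps)
qed

lemma fst_local_view: "fst (local_view G idf R v) = card (verts G)"
  by (simp add: local_view_def Let_def)

text \<open>The algorithm maps a view to the output at the root of any instance realising that view.\<close>
lemma LOCAL_solves_if_view_determined: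
  fixes F :: "('v,'i) igraph \<Rightarrow> ('v \<Rightarrow> nat) \<Rightarrow> 'v \<Rightarrow> 'o"
  assumes lv: "local_verifier \<G> \<Gamma> \<psi> r"
    and sol: "\<And>G idf. G \<in> \<G> \<Longrightarrow> valid_ids G c idf \<Longrightarrow> is_solution \<Gamma> \<psi> G (F G idf)"
    and det: "\<And>G G' idf idf' v v'. G \<in> \<G> \<Longrightarrow> G' \<in> \<G> \<Longrightarrow> valid_ids G c idf \<Longrightarrow>
      valid_ids G' c idf' \<Longrightarrow> v \<in> verts G \<Longrightarrow> v' \<in> verts G' \<Longrightarrow>
      local_view G idf (t (card (verts G))) v = local_view G' idf' (t (card (verts G))) v' \<Longrightarrow>
      F G' idf' v' = F G idf v"
  shows "\<exists>A. LOCAL_solves \<G> \<Gamma> \<psi> A t c"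
proof -
  define realises :: "('v,'i) igraph \<times> ('v \<Rightarrow> nat) \<times> 'v \<Rightarrow> 'i view \<Rightarrow> bool" where
    "realises x view \<longleftrightarrow> (case x of (G, idf, v) \<Rightarrow> G \<in> \<G> \<and> valid_ids G c idf \<and> v \<in> verts G \<and>
       local_view G idf (t (card (verts G))) v = view)" for x view
  define A where "A view = (case SOME x. realises x view of (G, idf, v) \<Rightarrow> F G idf v)" for view
  have A_view: "A (local_view G idf (t (card (verts G))) v) = F G idf v"
    if G: "G \<in> \<G>" and ids: "valid_ids G c idf" and v: "v \<in> verts G" for G idf v
  proof -
    let ?view = "local_view G idf (t (card (verts G))) v"
    obtain G0 idf0 v0 where x0: "(SOME x. realises x ?view) = (G0, idf0, v0)"
      by (metis prod_cases3)
    have "realises (G, idf, v) ?view" unfolding realises_def using G ids v by simp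
    then have "realises (G0, idf0, v0) ?view" unfolding x0[symmetric] by (rule someI)
    then have G0: "G0 \<in> \<G>" "valid_ids G0 c idf0" "v0 \<in> verts G0"
      and view0: "local_view G0 idf0 (t (card (verts G0))) v0 = ?view"
      unfolding realises_def by auto
    have "card (verts G0) = card (verts G)"
      using arg_cong[OF view0, of fst] unfolding fst_local_view .
    then have "F G idf v = F G0 idf0 v0"
      using det[OF G0(1) G G0(2) ids G0(3) v] view0 by simp
    then show ?thesis unfolding A_def x0 by simp
  qed
  have "is_solution \<Gamma> \<psi> G (\<lambda>v. A (local_view G idf (t (card (verts G))) v))"
    if G: "G \<in> \<G>" and ids: "valid_ids G c idf" for G idf
    by (rule is_solution_cong[OF lv G sol[OF G ids]]) (simp add: A_view[OF G ids])
  then show ?thesis unfolding LOCAL_solves_def by blast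
qed

theorem corollary6p3:
  fixes \<G> :: "('v,'i) igraph set" and \<Sigma> :: "'i set" and \<Gamma> :: "'o set"
    and \<psi> :: "('v,'i) igraph \<Rightarrow> ('v \<Rightarrow> 'o) \<Rightarrow> 'v \<Rightarrow> bool" and r :: nat
  assumes "LCL \<G> \<Sigma> \<Gamma> \<psi> r"
    and "\<exists>T::nat. mendable \<G> \<Gamma> \<psi> r (\<lambda>_. T)"
  shows "solvable_in_O_log_star \<G> \<Gamma> \<psi>"
  unfolding solvable_in_O_log_star_def
proof
  fix c :: nat
  obtain \<Delta> T where "\<forall>G\<in>\<G>. wf_graph G" "\<forall>G\<in>\<G>. max_degree_le G \<Delta>"
    "local_verifier \<G> \<Gamma> \<psi> r" "mendable \<G> \<Gamma> \<psi> r (\<lambda>_. T)"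
    using assms unfolding LCL_def by blast
  then interpret mending_setting \<G> \<Gamma> \<psi> r T \<Delta> c
    by unfold_locales auto
  obtain A where "LOCAL_solves \<G> \<Gamma> \<psi> A run_time c"
    using LOCAL_solves_if_view_determined[where F = out_label and t = run_time,
        OF verifier out_label_is_solution out_label_view_invariant] by blast
  then show "\<exists>A t C. (\<forall>n. t n \<le> C * (log_star n + 1)) \<and> LOCAL_solves \<G> \<Gamma> \<psi> A t c"
    using run_time_le by blast
qed

end
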